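(* Consider the setting described in the context, and assume A1–A5. A sequence of alternatives $f_n$ with $cn^{-r}<\|f_n\|<Cn^{-r}$ (constants $0<c<C$) is purely $n^{-r}$-consistent if and only if for every $n^{-r}$-inconsistent subsequence of alternatives $f_{1n_i}$ (with $n_i\to\infty$) one has $$\|f_{n_i}+f_{1n_i}\|^2=\|f_{n_i}\|^2+\|f_{1n_i}\|^2+o(n_i^{-r})\quad\text{as }i\to\infty .$$
   Context: Fix $\sigma>0$, $0<r<1/2$ and an orthonormal basis $(\phi_j)_{j\ge1}$ of $\mathbb{L}_2(0,1)$. For each $n$ one observes $dY_n(t)=f(t)\,dt+\sigma n^{-1/2}dw(t)$, equivalently $y_j=\theta_j+\sigma n^{-1/2}\xi_j$, $\theta_j=\int_0^1f\phi_j$, $\xi_j$ i.i.d. $N(0,1)$; $H_0:f=0$. Weights $\kappa_{nj}^2\ge0$, $\rho_n=\sum_j\kappa_{nj}^2$, $T_n(Y_n)=\sum_j\kappa_{nj}^2y_j^2-\sigma^2n^{-1}\rho_n$, $k_n=\sup\{k:\sum_{j<k}\kappa_{nj}^2\le\rho_n/2\}$, $\kappa_n^2=\kappa_{nk_n}^2$. Assumptions: (A1) $j\mapsto\kappa_{nj}^2$ decreasing; (A2) $C_1<\sigma^{-4}n^2\sum_j\kappa_{nj}^4<C_2$; (A3) $c_1n^{-2r}\le\rho_n\le c_2n^{-2r}$; (A4) $\exists C_1>0,\lambda>1$: $\kappa^2_{n,[(1+\delta)k_n]}<C_1(1+\delta)^{-\lambda}\kappa_n^2$ for all $\delta>0,n$;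 (A5) $\kappa_{n1}^2\asymp\kappa_n^2$ and for each $c>1$ there is $C>0$ with $\kappa^2_{n,[ck_n]}\ge C\kappa_n^2$. A test generated by $T_n$ rejects $H_0$ iff $T_n$ exceeds a threshold. A (sub)sequence $f_{n_i}$ is consistent if for every $\alpha\in(0,1)$ and every sequence of tests $K_{n_i}$ generated by $T_{n_i}$ with $\alpha(K_{n_i})=\alpha(1+o(1))$, $\limsup_i\beta(K_{n_i},f_{n_i})<1-\alpha$; inconsistent if for every sequence of tests $K_{n_i}$ generated by $T_{n_i}$, $\liminf_i(\alpha(K_{n_i})+\beta(K_{n_i},f_{n_i}))\ge1$. It is $n^{-r}$-consistent (resp. $n^{-r}$-inconsistent) if it is consistent (resp. inconsistent) and $cn_i^{-r}<\|f_{n_i}\|<Cn_i^{-r}$ for some $0<c<C$. An $n^{-r}$-consistent $f_n$ is purely $n^{-r}$-consistent if there is no subsequence with $f_{n_i}=f_{1n_i}+f_{2n_i}$, $f_{2n_i}\perp f_{1n_i}$, $\|f_{2n_i}\|>c_1n_i^{-r}$ for some $c_1>0$, and $f_{2n_i}$ inconsistent. *)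

theory Defs
  imports "HOL-Probability.Probability"
begin

text \<open>A signal f is represented by its coefficient sequence
  theta (theta j = <f, phi_(j+1)>, j = 0,1,2,... ; 0-based), which is an isometry
  L2(0,1) -> l2. Weights: w n j = kappa^2_(n,j+1) (0-based), i.e. the paper's
  1-based weight kappa^2_(n,m) is w n (m - 1).\<close>

definition l2 :: "(nat \<Rightarrow> real) \<Rightarrow> bool" where
  "l2 \<theta> \<longleftrightarrow> summable (\<lambda>j. (\<theta> j)\<^sup>2)"

definition nrm :: "(nat \<Rightarrow> real) \<Rightarrow> real" where
  "nrm \<theta> = sqrt (\<Sum>j. (\<theta> j)\<^sup>2)"

definition inr :: "(nat \<Rightarrow> real) \<Rightarrow> (nat \<Rightarrow> real) \<Rightarrow> real" where
  "inr \<theta> \<eta> = (\<Sum>j. \<theta> j * \<eta> j)"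

definition gauss :: "(nat \<Rightarrow> real) measure" where
  "gauss = PiM UNIV (\<lambda>_. density lborel std_normal_density)"

definition rho :: "(nat \<Rightarrow> nat \<Rightarrow> real) \<Rightarrow> nat \<Rightarrow> real" where
  "rho w n = (\<Sum>j. w n j)"

definition Tstat :: "(nat \<Rightarrow> nat \<Rightarrow> real) \<Rightarrow> real \<Rightarrow> nat \<Rightarrow> (nat \<Rightarrow> real) \<Rightarrow> (nat \<Rightarrow> real) \<Rightarrow> real" where
  "Tstat w \<sigma> n \<theta> \<xi> =
     (\<Sum>j. w n j * (\<theta> j + \<sigma> / sqrt (real n) * \<xi> j)\<^sup>2) - \<sigma>\<^sup>2 / real n * rho w n"

text \<open>k_n (1-based index, as in the paper) and kappa_n^2 = kappa^2_(n,k_n).\<close>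
definition kn :: "(nat \<Rightarrow> nat \<Rightarrow> real) \<Rightarrow> nat \<Rightarrow> nat" where
  "kn w n = Sup {k::nat. 1 \<le> k \<and> (\<Sum>m\<in>{1..<k}. w n (m - 1)) \<le> rho w n / 2}"

definition kap :: "(nat \<Rightarrow> nat \<Rightarrow> real) \<Rightarrow> nat \<Rightarrow> real" where
  "kap w n = w n (kn w n - 1)"

definition alpha_err :: "(nat \<Rightarrow> nat \<Rightarrow> real) \<Rightarrow> real \<Rightarrow> nat \<Rightarrow> real \<Rightarrow> real" where
  "alpha_err w \<sigma> n t = measure gauss {\<xi> \<in> space gauss. Tstat w \<sigma> n (\<lambda>_. 0) \<xi> > t}"

definition beta_err :: "(nat \<Rightarrow> nat \<Rightarrow> real) \<Rightarrow> real \<Rightarrow> nat \<Rightarrow> (nat \<Rightarrow> real) \<Rightarrow> real \<Rightarrow> real" where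
  "beta_err w \<sigma> n \<theta> t = measure gauss {\<xi> \<in> space gauss. Tstat w \<sigma> n \<theta> \<xi> \<le> t}"

text \<open>A (sub)sequence of alternatives: g i is the alternative at sample size ns i.\<close>
definition consistent :: "(nat \<Rightarrow> nat \<Rightarrow> real) \<Rightarrow> real \<Rightarrow> (nat \<Rightarrow> nat) \<Rightarrow> (nat \<Rightarrow> nat \<Rightarrow> real) \<Rightarrow> bool" where
  "consistent w \<sigma> ns g \<longleftrightarrow>
     (\<forall>a::real. 0 < a \<and> a < 1 \<longrightarrow>
       (\<forall>t::nat \<Rightarrow> real. (\<lambda>i. alpha_err w \<sigma> (ns i) (t i) / a) \<longlonglongrightarrow> 1 \<longrightarrow>
          limsup (\<lambda>i. ereal (beta_err w \<sigma> (ns i) (g i) (t i))) < ereal (1 - a)))"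

definition inconsistent :: "(nat \<Rightarrow> nat \<Rightarrow> real) \<Rightarrow> real \<Rightarrow> (nat \<Rightarrow> nat) \<Rightarrow> (nat \<Rightarrow> nat \<Rightarrow> real) \<Rightarrow> bool" where
  "inconsistent w \<sigma> ns g \<longleftrightarrow>
     (\<forall>t::nat \<Rightarrow> real.
        liminf (\<lambda>i. ereal (alpha_err w \<sigma> (ns i) (t i) + beta_err w \<sigma> (ns i) (g i) (t i))) \<ge> 1)"

definition rate_bounded :: "real \<Rightarrow> (nat \<Rightarrow> nat) \<Rightarrow> (nat \<Rightarrow> nat \<Rightarrow> real) \<Rightarrow> bool" where
  "rate_bounded r ns g \<longleftrightarrow>
     (\<exists>c C. 0 < c \<and> c < C \<and>
        (\<forall>i. 1 \<le> ns i \<longrightarrow> c * real (ns i) powr (-r) < nrm (g i) \<and> nrm (g i) < C * real (ns i) powr (-r)))"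

definition r_consistent where
  "r_consistent w \<sigma> r ns g \<longleftrightarrow> consistent w \<sigma> ns g \<and> rate_bounded r ns g"

definition r_inconsistent where
  "r_inconsistent w \<sigma> r ns g \<longleftrightarrow> inconsistent w \<sigma> ns g \<and> rate_bounded r ns g"

definition subseq_idx :: "(nat \<Rightarrow> nat) \<Rightarrow> bool" where
  "subseq_idx ns \<longleftrightarrow> strict_mono ns \<and> 1 \<le> ns 0"

text \<open>Purely n^(-r)-consistent, for a full sequence f (f n = alternative at sample size n;
  f 0 is irrelevant).\<close>
definition purely_r_consistent where
  "purely_r_consistent w \<sigma> r f \<longleftrightarrow>
     r_consistent w \<sigma> r id f \<and>
     \<not> (\<exists>ns f1 f2 c1. subseq_idx ns \<and> 0 < c1 \<and>
          (\<forall>i. l2 (f1 i) \<and> l2 (f2 i) \<and> f (ns i) = (\<lambda>j. f1 i j + f2 i j) \<and>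
               inr (f2 i) (f1 i) = 0 \<and> c1 * real (ns i) powr (-r) < nrm (f2 i)) \<and>
          inconsistent w \<sigma> ns f2)"

end

theory Submission
  imports Defs
begin

text \<open>
  Under \<open>H\<^sub>0\<close> the statistic \<open>T\<^sub>n\<close>, divided by its standard deviation \<open>\<tau>\<^sub>n\<close>, is a centred weighted
  chi-square series \<open>\<Sum> u\<^sub>j (\<xi>\<^sub>j\<^sup>2 - 1)\<close>. Assumptions A1--A3 and A5 force the largest normalised
  weight to vanish, so by a Lyapunov-type central limit theorem the series is asymptotically
  standard normal, uniformly in the threshold. Under an alternative \<open>\<theta>\<close> one has
  \<open>T\<^sub>n / \<tau>\<^sub>n = U\<^sub>n + D\<^sub>n(\<theta>) + X\<^sub>n(\<theta>)\<close> with the signal-to-noise ratio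
  \<open>D\<^sub>n(\<theta>) = \<Sum> \<kappa>\<^sup>2\<^sub>n\<^sub>j \<theta>\<^sub>j\<^sup>2 / \<tau>\<^sub>n\<close> and a Gaussian cross term \<open>X\<^sub>n\<close> of variance \<open>o(D\<^sub>n)\<close>. Hence a sequence
  of alternatives is inconsistent iff \<open>D\<^sub>n \<rightarrow> 0\<close>, and consistent once \<open>D\<^sub>n\<close> stays away from \<open>0\<close>.
  The vanishing of the largest normalised weight is the only consequence of the weight
  assumptions that is used.

  As \<open>D\<^sub>n\<close> is a quadratic form, bounded multiples of inconsistent sequences are inconsistent, and
  the theorem becomes geometry in \<open>\<ell>\<^sub>2\<close>, where the defect
  \<open>\<parallel>f\<^sub>n + f\<^sub>1\<^sub>n\<parallel>\<^sup>2 - \<parallel>f\<^sub>n\<parallel>\<^sup>2 - \<parallel>f\<^sub>1\<^sub>n\<parallel>\<^sup>2\<close> is \<open>2\<langle>f\<^sub>n, f\<^sub>1\<^sub>n\<rangle>\<close>. If this inner product is not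
  \<open>o(n\<^sup>-\<^sup>2\<^sup>r)\<close> for an inconsistent \<open>f\<^sub>1\<^sub>n\<close>, the projection of \<open>f\<^sub>n\<close> onto \<open>f\<^sub>1\<^sub>n\<close> is an inconsistent
  orthogonal component of size \<open>n\<^sup>-\<^sup>r\<close>. Conversely, testing against \<open>-f\<^sub>n\<close> (along a subsequence
  with \<open>D\<^sub>n \<rightarrow> 0\<close>) or against \<open>-f\<^sub>2\<^sub>n\<close> (for an inconsistent orthogonal component \<open>f\<^sub>2\<^sub>n\<close>) makes
  the defect \<open>-2\<parallel>\<cdot>\<parallel>\<^sup>2\<close>, which is not \<open>o(n\<^sup>-\<^sup>2\<^sup>r)\<close>.
\<close>

section \<open>The Gaussian sequence space\<close>

lemma prob_space_gauss: "prob_space gauss"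
  unfolding gauss_def by (rule prob_space_PiM) (simp add: prob_space_normal_density)

interpretation gauss: prob_space gauss
  by (rule prob_space_gauss)

lemma measurable_gauss_coordinate [measurable]: "(\<lambda>x. x i) \<in> borel_measurable gauss"
  unfolding gauss_def
  by (metis measurable_component_singleton measurable_cong_sets sets_density sets_lborel UNIV_I)

lemma distr_gauss_coordinate: "distr gauss borel (\<lambda>x. x i) = std_normal_distribution"
proof -
  have "distr gauss borel (\<lambda>x. x i) = distr gauss std_normal_distribution (\<lambda>x. x i)"
    by (rule distr_cong) auto
  also have "\<dots> = std_normal_distribution"
    unfolding gauss_def
    using distr_PiM_component[of UNIV "\<lambda>_. std_normal_distribution" i]
    by (simp add: prob_space_normal_density)
  finally show ?thesis .
qed

lemma indep_vars_gauss_coordinates: "gauss.indep_vars (\<lambda>_. borel) (\<lambda>i x. x i) UNIV"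
proof (subst gauss.indep_vars_iff_distr_eq_PiM)
  have "distr gauss (Pi\<^sub>M UNIV (\<lambda>i. borel)) (\<lambda>x. \<lambda>i\<in>UNIV. x i) = distr gauss gauss (\<lambda>x. x)"
    by (rule distr_cong) (auto simp: gauss_def intro!: sets_PiM_cong)
  then show "distr gauss (Pi\<^sub>M UNIV (\<lambda>i. borel)) (\<lambda>x. \<lambda>i\<in>UNIV. x i)
      = Pi\<^sub>M UNIV (\<lambda>i. distr gauss borel (\<lambda>x. x i))"
    unfolding distr_gauss_coordinate by (simp add: gauss_def)
qed auto

lemma integral_gauss_coordinate:
  fixes g :: "real \<Rightarrow> real"
  assumes [measurable]: "g \<in> borel_measurable borel"
  shows "(\<integral>x. g (x i) \<partial>gauss) = (\<integral>y. g y \<partial>std_normal_distribution)"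
  using integral_distr[OF measurable_gauss_coordinate assms] by (simp add: distr_gauss_coordinate)

lemma integrable_gauss_coordinate:
  fixes g :: "real \<Rightarrow> real"
  assumes [measurable]: "g \<in> borel_measurable borel"
  shows "integrable gauss (\<lambda>x. g (x i)) \<longleftrightarrow> integrable std_normal_distribution g"
  using integrable_distr_eq[OF measurable_gauss_coordinate assms] by (simp add: distr_gauss_coordinate)

lemma integrable_gauss_coordinate_power: "integrable gauss (\<lambda>x. (x i) ^ k)"
  using integrable_gauss_coordinate[of "\<lambda>y. y ^ k" i] integrable_std_normal_distribution_moment
  by simp

lemma integral_gauss_coordinate_power:
  "(\<integral>x. x i \<partial>gauss) = 0" "(\<integral>x. (x i)\<^sup>2 \<partial>gauss) = 1" "(\<integral>x. (x i) ^ 4 \<partial>gauss) = 3"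
  using integral_gauss_coordinate[of "\<lambda>y. y ^ 1" i] integral_std_normal_distribution_moment_odd[of 1]
    integral_gauss_coordinate[of "\<lambda>y. y ^ (2 * 1)" i] std_normal_distribution_even_moments(1)[of 1]
    integral_gauss_coordinate[of "\<lambda>y. y ^ (2 * 2)" i] std_normal_distribution_even_moments(1)[of 2]
  by (simp_all add: fact_numeral)

lemma integral_gauss_coordinate_product:
  "integrable gauss (\<lambda>x. x i * x j)" "(\<integral>x. x i * x j \<partial>gauss) = (if i = j then 1 else 0)"
proof -
  have indep: "gauss.indep_vars (\<lambda>_. borel) (\<lambda>i x. x i) {i, j}"
    by (rule gauss.indep_vars_subset[OF indep_vars_gauss_coordinates]) auto
  have "integrable gauss (\<lambda>x. x i * x j) \<and> (\<integral>x. x i * x j \<partial>gauss) = (if i = j then 1 else 0)"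
  proof (cases "i = j")
    case True
    then show ?thesis
      using integrable_gauss_coordinate_power[of j 2] integral_gauss_coordinate_power(2)[of j]
      by (simp add: power2_eq_square)
  next
    case False
    have "integrable gauss (\<lambda>x. \<Prod>k\<in>{i,j}. x k)"
      by (rule gauss.indep_vars_integrable[OF _ indep])
        (auto intro: integrable_gauss_coordinate_power[where k=1, simplified])
    moreover have "(\<integral>x. (\<Prod>k\<in>{i,j}. x k) \<partial>gauss) = (\<Prod>k\<in>{i,j}. \<integral>x. x k \<partial>gauss)"
      by (rule gauss.indep_vars_lebesgue_integral[OF _ indep])
        (auto intro: integrable_gauss_coordinate_power[where k=1, simplified])
    ultimately show ?thesis
      using False integral_gauss_coordinate_power(1) by simp
  qed
  then show "integrable gauss (\<lambda>x. x i * x j)" "(\<integral>x. x i * x j \<partial>gauss) = (if i = j then 1 else 0)"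
    by auto
qed

lemma integral_gauss_linear_form_sq:
  "integrable gauss (\<lambda>x. (\<Sum>j<N. a j * x j)\<^sup>2)"
  "(\<integral>x. (\<Sum>j<N. a j * x j)\<^sup>2 \<partial>gauss) = (\<Sum>j<N. (a j)\<^sup>2)"
proof -
  have expand: "(\<Sum>j<N. a j * x j)\<^sup>2 = (\<Sum>i<N. \<Sum>j<N. a i * a j * (x i * x j))" for x
    by (simp add: power2_eq_square sum_product algebra_simps)
  have int: "integrable gauss (\<lambda>x. a i * a j * (x i * x j))" for i j
    by (intro integrable_mult_right integral_gauss_coordinate_product(1))
  show "integrable gauss (\<lambda>x. (\<Sum>j<N. a j * x j)\<^sup>2)"
    unfolding expand by (intro Bochner_Integration.integrable_sum int)
  have "(\<integral>x. (\<Sum>j<N. a j * x j)\<^sup>2 \<partial>gauss) = (\<Sum>i<N. \<Sum>j<N. \<integral>x. a i * a j * (x i * x j) \<partial>gauss)"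
    unfolding expand
    by (subst Bochner_Integration.integral_sum, intro Bochner_Integration.integrable_sum int)
      (intro sum.cong refl Bochner_Integration.integral_sum int)
  also have "\<dots> = (\<Sum>i<N. \<Sum>j<N. a i * a j * (\<integral>x. x i * x j \<partial>gauss))"
    by simp
  also have "\<dots> = (\<Sum>j<N. (a j)\<^sup>2)"
    by (simp add: integral_gauss_coordinate_product(2) power2_eq_square if_distrib sum.delta cong: if_cong)
  finally show "(\<integral>x. (\<Sum>j<N. a j * x j)\<^sup>2 \<partial>gauss) = (\<Sum>j<N. (a j)\<^sup>2)" .
qed

lemma AE_gauss_summable_weighted_sq:
  assumes "\<And>j. 0 \<le> v j" "summable v"
  shows "AE x in gauss. summable (\<lambda>j. v j * (x j)\<^sup>2)"
proof -
  have coord: "(\<integral>\<^sup>+x. ennreal (v j * (x j)\<^sup>2) \<partial>gauss) = ennreal (v j)" for j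
  proof -
    have "(\<integral>\<^sup>+x. ennreal (v j * (x j)\<^sup>2) \<partial>gauss) = ennreal (\<integral>x. v j * (x j)\<^sup>2 \<partial>gauss)"
      using assms(1) by (intro nn_integral_eq_integral)
        (auto intro: integrable_mult_right integrable_gauss_coordinate_power)
    then show ?thesis by (simp add: integral_gauss_coordinate_power(2))
  qed
  have "(\<integral>\<^sup>+x. (\<Sum>j. ennreal (v j * (x j)\<^sup>2)) \<partial>gauss) = (\<Sum>j. ennreal (v j))"
    by (simp add: nn_integral_suminf coord)
  also have "\<dots> = ennreal (suminf v)"
    using assms by (rule suminf_ennreal2)
  finally have "AE x in gauss. (\<Sum>j. ennreal (v j * (x j)\<^sup>2)) \<noteq> \<infinity>"
    by (intro nn_integral_noteq_infinite) simp_all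
  then show ?thesis
    by eventually_elim (rule summable_suminf_not_top, use assms in auto)
qed

lemma gauss_linear_series_tail:
  assumes "AE x in gauss. summable (\<lambda>j. a j * x j)" "summable (\<lambda>j. (a j)\<^sup>2)" "0 < c"
  shows "gauss.prob {x \<in> space gauss. c \<le> \<bar>\<Sum>j. a j * x j\<bar>} \<le> (\<Sum>j. (a j)\<^sup>2) / c\<^sup>2"
proof -
  let ?L = "\<lambda>x. \<Sum>j. a j * x j"
  have "(\<integral>\<^sup>+x. ennreal ((?L x)\<^sup>2) \<partial>gauss) = (\<integral>\<^sup>+x. liminf (\<lambda>N. ennreal ((\<Sum>j<N. a j * x j)\<^sup>2)) \<partial>gauss)"
    using assms(1)
    by (intro nn_integral_cong_AE, eventually_elim)
      (intro lim_imp_Liminf[symmetric] tendsto_ennrealI tendsto_intros summable_LIMSEQ, auto)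
  also have "\<dots> \<le> liminf (\<lambda>N. \<integral>\<^sup>+x. ennreal ((\<Sum>j<N. a j * x j)\<^sup>2) \<partial>gauss)"
    by (rule nn_integral_liminf) simp
  also have "\<dots> = liminf (\<lambda>N. ennreal (\<Sum>j<N. (a j)\<^sup>2))"
    by (simp add: nn_integral_eq_integral integral_gauss_linear_form_sq)
  also have "\<dots> = ennreal (\<Sum>j. (a j)\<^sup>2)"
    using assms(2) by (intro lim_imp_Liminf tendsto_ennrealI summable_LIMSEQ) simp_all
  finally have second_moment: "(\<integral>\<^sup>+x. ennreal ((?L x)\<^sup>2) \<partial>gauss) \<le> ennreal (\<Sum>j. (a j)\<^sup>2)" .
  have "{x \<in> space gauss. c \<le> \<bar>?L x\<bar>} \<in> sets gauss"
    by measurable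
  then have "ennreal (c\<^sup>2) * emeasure gauss {x \<in> space gauss. c \<le> \<bar>?L x\<bar>}
      = (\<integral>\<^sup>+x. ennreal (c\<^sup>2) * indicator {x \<in> space gauss. c \<le> \<bar>?L x\<bar>} x \<partial>gauss)"
    by (simp add: nn_integral_cmult_indicator)
  also have "\<dots> \<le> (\<integral>\<^sup>+x. ennreal ((?L x)\<^sup>2) \<partial>gauss)"
    using assms(3) by (intro nn_integral_mono)
      (auto simp: indicator_def intro!: ennreal_leI abs_le_square_iff[THEN iffD1])
  finally have "ennreal (c\<^sup>2 * gauss.prob {x \<in> space gauss. c \<le> \<bar>?L x\<bar>}) \<le> ennreal (\<Sum>j. (a j)\<^sup>2)"
    using second_moment by (simp add: gauss.emeasure_eq_measure ennreal_mult')
  then have "c\<^sup>2 * gauss.prob {x \<in> space gauss. c \<le> \<bar>?L x\<bar>} \<le> (\<Sum>j. (a j)\<^sup>2)"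
    by (simp add: suminf_nonneg[OF assms(2)])
  then show ?thesis
    using assms(3) by (simp add: field_simps)
qed

section \<open>The standard normal distribution function\<close>

abbreviation \<Phi> :: "real \<Rightarrow> real" where
  "\<Phi> \<equiv> cdf std_normal_distribution"

interpretation std_normal: real_distribution std_normal_distribution
  by (rule real_dist_normal_dist)

lemma std_normal_density_le_1: "std_normal_density x \<le> 1"
proof -
  have "exp (- x\<^sup>2 / 2) \<le> 1" by simp
  also have "1 \<le> sqrt (2 * pi)" using pi_gt3 by simp
  finally show ?thesis
    unfolding std_normal_density_def by (simp add: divide_le_eq_1)
qed

lemma std_normal_density_antimono:
  assumes "\<bar>x\<bar> \<le> K"
  shows "std_normal_density K \<le> std_normal_density x"
proof -
  have "x\<^sup>2 \<le> K\<^sup>2"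
    using power_mono[OF assms abs_ge_zero, of 2] by simp
  then show ?thesis
    unfolding std_normal_density_def by (simp add: divide_right_mono)
qed

lemma Phi_diff_eq_integral:
  assumes "a < b"
  shows "ennreal (\<Phi> b - \<Phi> a) = (\<integral>\<^sup>+x. ennreal (std_normal_density x) * indicator {a<..b} x \<partial>lborel)"
  using std_normal.cdf_diff_eq[OF assms]
  by (simp add: emeasure_density std_normal.emeasure_eq_measure[symmetric])

lemma Phi_diff_le:
  assumes "a \<le> b"
  shows "\<Phi> b - \<Phi> a \<le> b - a"
proof (cases "a = b")
  case False
  then have "a < b" using assms by simp
  have "ennreal (\<Phi> b - \<Phi> a) \<le> (\<integral>\<^sup>+x. indicator {a<..b} x \<partial>lborel)"
    unfolding Phi_diff_eq_integral[OF \<open>a < b\<close>]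
    by (intro nn_integral_mono) (auto simp: indicator_def std_normal_density_le_1)
  then show ?thesis
    using \<open>a < b\<close> by (simp add: ennreal_le_iff)
qed simp

lemma Phi_diff_ge:
  assumes "a \<le> b" "\<bar>a\<bar> \<le> K" "\<bar>b\<bar> \<le> K"
  shows "(b - a) * std_normal_density K \<le> \<Phi> b - \<Phi> a"
proof (cases "a = b")
  case False
  then have "a < b" using assms by simp
  have "ennreal ((b - a) * std_normal_density K)
      = (\<integral>\<^sup>+x. ennreal (std_normal_density K) * indicator {a<..b} x \<partial>lborel)"
    using \<open>a < b\<close> by (simp add: nn_integral_cmult ennreal_mult' mult.commute)
  also have "\<dots> \<le> ennreal (\<Phi> b - \<Phi> a)"
    unfolding Phi_diff_eq_integral[OF \<open>a < b\<close>] using assms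
    by (intro nn_integral_mono)
      (auto simp: indicator_def intro!: ennreal_leI std_normal_density_antimono)
  finally show ?thesis
    using std_normal.cdf_nondecreasing[OF assms(1)] by (simp add: ennreal_le_iff)
qed simp

lemma Phi_lipschitz: "\<bar>\<Phi> x - \<Phi> y\<bar> \<le> \<bar>x - y\<bar>"
  using Phi_diff_le[of x y] Phi_diff_le[of y x]
    std_normal.cdf_nondecreasing[of x y] std_normal.cdf_nondecreasing[of y x]
  by (cases "x \<le> y") auto

lemma isCont_Phi: "isCont \<Phi> x"
  by (rule continuous_at_eps_delta[THEN iffD2])
    (auto simp: dist_real_def intro!: exI le_less_trans[OF Phi_lipschitz])

section \<open>A central limit theorem for weighted chi-square series\<close>

definition centred_chi2 :: "(nat \<Rightarrow> real) \<Rightarrow> (nat \<Rightarrow> real) \<Rightarrow> real" where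
  "centred_chi2 u x = (\<Sum>j. u j * ((x j)\<^sup>2 - 1))"

definition chi2_abs_moment3 :: real where
  "chi2_abs_moment3 = (\<integral>y. \<bar>y\<^sup>2 - 1\<bar> ^ 3 \<partial>std_normal_distribution)"

lemma measurable_centred_chi2 [measurable]: "centred_chi2 u \<in> borel_measurable gauss"
  unfolding centred_chi2_def by measurable

lemma chi2_abs_moment3_nonneg: "0 \<le> chi2_abs_moment3"
  unfolding chi2_abs_moment3_def by (rule integral_nonneg_AE) simp

lemma integrable_chi2_abs_moment3: "integrable std_normal_distribution (\<lambda>y. \<bar>y\<^sup>2 - 1\<bar> ^ 3)"
proof -
  have "(y\<^sup>2 - 1) ^ 3 = y ^ 6 - 3 * y ^ 4 + 3 * y\<^sup>2 - 1" for y :: real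
    by (simp add: power3_eq_cube power2_eq_square algebra_simps power_numeral_reduce)
  then have "integrable std_normal_distribution (\<lambda>y. (y\<^sup>2 - 1) ^ 3)"
    by (simp add: integrable_std_normal_distribution_moment)
  then have "integrable std_normal_distribution (\<lambda>y. \<bar>(y\<^sup>2 - 1) ^ 3\<bar>)"
    by (rule integrable_abs)
  then show ?thesis
    by (simp add: power_abs)
qed

lemma centred_chi2_coordinate_moments:
  fixes u :: real and j :: nat
  defines "X \<equiv> \<lambda>x. u * ((x j)\<^sup>2 - 1)"
  shows "integrable gauss X" "(\<integral>x. X x \<partial>gauss) = 0"
    "integrable gauss (\<lambda>x. (X x)\<^sup>2)" "(\<integral>x. (X x)\<^sup>2 \<partial>gauss) = 2 * u\<^sup>2"
    "integrable gauss (\<lambda>x. \<bar>X x\<bar> ^ 3)" "(\<integral>x. \<bar>X x\<bar> ^ 3 \<partial>gauss) = \<bar>u\<bar> ^ 3 * chi2_abs_moment3"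
proof -
  note int = integrable_gauss_coordinate_power and mom = integral_gauss_coordinate_power
  have sq: "(X x)\<^sup>2 = u\<^sup>2 * (x j) ^ 4 - 2 * u\<^sup>2 * (x j)\<^sup>2 + u\<^sup>2" for x
    by (simp add: X_def power2_eq_square algebra_simps power_numeral_reduce)
  have cube: "\<bar>X x\<bar> ^ 3 = \<bar>u\<bar> ^ 3 * \<bar>(x j)\<^sup>2 - 1\<bar> ^ 3" for x
    by (simp add: X_def abs_mult power_mult_distrib)
  have meas: "(\<lambda>y::real. \<bar>y\<^sup>2 - 1\<bar> ^ 3) \<in> borel_measurable borel"
    by measurable
  show "integrable gauss X" "(\<integral>x. X x \<partial>gauss) = 0"
    unfolding X_def using int[of j 2] by (simp_all add: mom gauss.prob_space)
  show "integrable gauss (\<lambda>x. (X x)\<^sup>2)" "(\<integral>x. (X x)\<^sup>2 \<partial>gauss) = 2 * u\<^sup>2"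
    unfolding sq using int[of j 2] int[of j 4] by (simp_all add: mom gauss.prob_space)
  show "integrable gauss (\<lambda>x. \<bar>X x\<bar> ^ 3)" "(\<integral>x. \<bar>X x\<bar> ^ 3 \<partial>gauss) = \<bar>u\<bar> ^ 3 * chi2_abs_moment3"
    unfolding cube chi2_abs_moment3_def
    by (simp_all add: integrable_gauss_coordinate[OF meas] integral_gauss_coordinate[OF meas]
        integrable_chi2_abs_moment3)
qed

lemma abs_one_minus_sub_exp_neg_le:
  fixes a :: real
  assumes "0 \<le> a"
  shows "\<bar>(1 - a) - exp (- a)\<bar> \<le> a\<^sup>2 / 2"
proof -
  have "0 \<le> 1 - a + a\<^sup>2 / 2"
    using sum_power2_ge_zero[of "1 - a / 2" "a / 2"] by (simp add: power2_eq_square algebra_simps)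
  then have "(1 - a + a\<^sup>2 / 2) * (1 + a + a\<^sup>2 / 2) \<le> (1 - a + a\<^sup>2 / 2) * exp a"
    by (intro mult_left_mono exp_lower_Taylor_quadratic assms)
  moreover have "1 \<le> (1 - a + a\<^sup>2 / 2) * (1 + a + a\<^sup>2 / 2)"
    using assms by (simp add: algebra_simps power2_eq_square power4_eq_xxxx)
  ultimately have "exp (- a) \<le> 1 - a + a\<^sup>2 / 2"
    by (simp add: exp_minus field_simps)
  then show ?thesis
    using exp_ge_add_one_self[of "- a"] by auto
qed

lemma char_centred_chi2_coordinate_approx:
  "cmod (char (distr gauss borel (\<lambda>x. u * ((x j)\<^sup>2 - 1))) t - exp (- (t\<^sup>2 * u\<^sup>2)))
     \<le> chi2_abs_moment3 * \<bar>t\<bar> ^ 3 * \<bar>u\<bar> ^ 3 / 6 + (t\<^sup>2 * u\<^sup>2)\<^sup>2 / 2"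
proof -
  let ?X = "\<lambda>x. u * ((x j)\<^sup>2 - 1)"
  note mom = centred_chi2_coordinate_moments[of u j]
  have "gauss.variance ?X = 2 * u\<^sup>2"
    unfolding mom(2) using mom(4) by simp
  then have "cmod (char (distr gauss borel ?X) t - (1 - t\<^sup>2 * (2 * u\<^sup>2) / 2))
      \<le> (t\<^sup>2 / 6) * (\<integral>x. min (6 * (?X x)\<^sup>2) (\<bar>t\<bar> * \<bar>?X x\<bar> ^ 3) \<partial>gauss)"
    by (intro gauss.char_approx3'[OF _ mom(1,3,2)]) simp_all
  also have "\<dots> \<le> (t\<^sup>2 / 6) * (\<integral>x. \<bar>t\<bar> * \<bar>?X x\<bar> ^ 3 \<partial>gauss)"
  proof (intro mult_left_mono integral_mono)
    show "integrable gauss (\<lambda>x. min (6 * (?X x)\<^sup>2) (\<bar>t\<bar> * \<bar>?X x\<bar> ^ 3))"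
      by (rule Bochner_Integration.integrable_bound[where f="\<lambda>x. 6 * (?X x)\<^sup>2"])
        (auto intro: integrable_mult_right mom(3))
  qed (auto intro: integrable_mult_right mom(5))
  also have "\<dots> = chi2_abs_moment3 * \<bar>t\<bar> ^ 3 * \<bar>u\<bar> ^ 3 / 6"
    using mom(6) by (simp add: power2_eq_square power3_eq_cube abs_mult)
  finally have "cmod (char (distr gauss borel ?X) t - (1 - t\<^sup>2 * u\<^sup>2))
      \<le> chi2_abs_moment3 * \<bar>t\<bar> ^ 3 * \<bar>u\<bar> ^ 3 / 6"
    by simp
  moreover have "cmod (complex_of_real (1 - t\<^sup>2 * u\<^sup>2) - exp (- (t\<^sup>2 * u\<^sup>2))) \<le> (t\<^sup>2 * u\<^sup>2)\<^sup>2 / 2"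
    using abs_one_minus_sub_exp_neg_le[of "t\<^sup>2 * u\<^sup>2"] by (simp flip: of_real_diff)
  ultimately show ?thesis
    by (rule norm_diff_triangle_le)
qed

lemma char_centred_chi2_coordinate_approx_le:
  assumes "0 \<le> u" "u \<le> umax"
  shows "cmod (char (distr gauss borel (\<lambda>x. u * ((x j)\<^sup>2 - 1))) t - exp (- (t\<^sup>2 * u\<^sup>2)))
     \<le> (chi2_abs_moment3 * \<bar>t\<bar> ^ 3 * umax / 6 + t ^ 4 * umax\<^sup>2 / 2) * u\<^sup>2"
proof -
  have "\<bar>u\<bar> ^ 3 = u * u\<^sup>2"
    using assms(1) by (simp add: power2_eq_square power3_eq_cube)
  also have "\<dots> \<le> umax * u\<^sup>2"
    using assms(2) by (simp add: mult_right_mono)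
  finally have "chi2_abs_moment3 * \<bar>t\<bar> ^ 3 * \<bar>u\<bar> ^ 3 \<le> chi2_abs_moment3 * \<bar>t\<bar> ^ 3 * (umax * u\<^sup>2)"
    using chi2_abs_moment3_nonneg by (intro mult_left_mono) simp_all
  moreover have "u\<^sup>2 \<le> umax\<^sup>2"
    using assms by (simp add: power_mono)
  then have "t ^ 4 * (u\<^sup>2 * u\<^sup>2) \<le> t ^ 4 * (umax\<^sup>2 * u\<^sup>2)"
    by (intro mult_right_mono mult_left_mono) simp_all
  then have "(t\<^sup>2 * u\<^sup>2)\<^sup>2 \<le> t ^ 4 * umax\<^sup>2 * u\<^sup>2"
    by (simp add: power2_eq_square power4_eq_xxxx ac_simps)
  ultimately have "chi2_abs_moment3 * \<bar>t\<bar> ^ 3 * \<bar>u\<bar> ^ 3 / 6 + (t\<^sup>2 * u\<^sup>2)\<^sup>2 / 2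
      \<le> (chi2_abs_moment3 * \<bar>t\<bar> ^ 3 * umax / 6 + t ^ 4 * umax\<^sup>2 / 2) * u\<^sup>2"
    by (simp add: algebra_simps)
  with char_centred_chi2_coordinate_approx[of u j t] show ?thesis
    by (rule order_trans)
qed

lemma char_centred_chi2_sum_approx:
  assumes "\<And>j. 0 \<le> u j" "\<And>j. u j \<le> umax"
  shows "cmod (char (distr gauss borel (\<lambda>x. \<Sum>j<N. u j * ((x j)\<^sup>2 - 1))) t
            - exp (- (t\<^sup>2 * (\<Sum>j<N. (u j)\<^sup>2))))
     \<le> (chi2_abs_moment3 * \<bar>t\<bar> ^ 3 * umax / 6 + t ^ 4 * umax\<^sup>2 / 2) * (\<Sum>j<N. (u j)\<^sup>2)"
proof -
  let ?c = "\<lambda>j. char (distr gauss borel (\<lambda>x. u j * ((x j)\<^sup>2 - 1))) t"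
  let ?e = "\<lambda>j. complex_of_real (exp (- (t\<^sup>2 * (u j)\<^sup>2)))"
  have indep: "gauss.indep_vars (\<lambda>_. borel) (\<lambda>j x. u j * ((x j)\<^sup>2 - 1)) {..<N}"
    using gauss.indep_vars_compose2[OF gauss.indep_vars_subset[OF indep_vars_gauss_coordinates],
        of "{..<N}" "\<lambda>j y. u j * (y\<^sup>2 - 1)"]
    by simp
  have "char (distr gauss borel (\<lambda>x. \<Sum>j<N. u j * ((x j)\<^sup>2 - 1))) t = (\<Prod>j<N. ?c j)"
    by (rule gauss.char_distr_sum[OF indep])
  moreover have "exp (- (t\<^sup>2 * (\<Sum>j<N. (u j)\<^sup>2))) = (\<Prod>j<N. exp (- (t\<^sup>2 * (u j)\<^sup>2)))"
    by (simp add: exp_sum[symmetric] sum_distrib_left sum_negf)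
  then have "complex_of_real (exp (- (t\<^sup>2 * (\<Sum>j<N. (u j)\<^sup>2)))) = (\<Prod>j<N. ?e j)"
    by simp
  moreover have "cmod ((\<Prod>j<N. ?c j) - (\<Prod>j<N. ?e j)) \<le> (\<Sum>j<N. cmod (?c j - ?e j))"
    by (rule norm_prod_diff)
      (auto intro: real_distribution.cmod_char_le_1 gauss.real_distribution_distr)
  moreover note char_centred_chi2_coordinate_approx_le[OF assms, of _ _ t]
  ultimately show ?thesis
    by (simp add: sum_distrib_left) (meson order_trans sum_mono)
qed

lemma summable_sq_if_bounded:
  fixes u :: "nat \<Rightarrow> real"
  assumes "\<And>j. 0 \<le> u j" "\<And>j. u j \<le> umax" "summable u"
  shows "summable (\<lambda>j. (u j)\<^sup>2)"
  by (rule summable_comparison_test[OF _ summable_mult[OF assms(3), of umax]])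
    (use assms in \<open>auto simp: power2_eq_square intro!: mult_right_mono\<close>)

lemma char_centred_chi2_approx:
  assumes "\<And>j. 0 \<le> u j" "\<And>j. u j \<le> umax" "summable u"
  shows "cmod (char (distr gauss borel (centred_chi2 u)) t - exp (- (t\<^sup>2 * (\<Sum>j. (u j)\<^sup>2))))
     \<le> (chi2_abs_moment3 * \<bar>t\<bar> ^ 3 * umax / 6 + t ^ 4 * umax\<^sup>2 / 2) * (\<Sum>j. (u j)\<^sup>2)"
proof -
  let ?S = "\<lambda>N x. \<Sum>j<N. u j * ((x j)\<^sup>2 - 1)"
  let ?B = "chi2_abs_moment3 * \<bar>t\<bar> ^ 3 * umax / 6 + t ^ 4 * umax\<^sup>2 / 2"
  have sq: "summable (\<lambda>j. (u j)\<^sup>2)"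
    by (rule summable_sq_if_bounded[OF assms])
  have B: "0 \<le> ?B"
    using chi2_abs_moment3_nonneg assms(1,2)[of 0] by simp
  have "AE x in gauss. (\<lambda>N. iexp (t * ?S N x)) \<longlonglongrightarrow> iexp (t * centred_chi2 u x)"
    using AE_gauss_summable_weighted_sq[OF assms(1,3)]
  proof eventually_elim
    case (elim x)
    then have "summable (\<lambda>j. u j * (x j)\<^sup>2 - u j)"
      using assms(3) by (rule summable_diff)
    then have "(\<lambda>N. ?S N x) \<longlonglongrightarrow> centred_chi2 u x"
      unfolding centred_chi2_def by (simp add: right_diff_distrib summable_LIMSEQ)
    then show ?case
      by (intro tendsto_intros)
  qed
  then have "(\<lambda>N. CLINT x|gauss. iexp (t * ?S N x)) \<longlonglongrightarrow> (CLINT x|gauss. iexp (t * centred_chi2 u x))"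
    by (intro integral_dominated_convergence[where w="\<lambda>_. 1"]) auto
  then have "(\<lambda>N. char (distr gauss borel (?S N)) t) \<longlonglongrightarrow> char (distr gauss borel (centred_chi2 u)) t"
    by (simp add: char_def integral_distr)
  then have "(\<lambda>N. cmod (char (distr gauss borel (?S N)) t - exp (- (t\<^sup>2 * (\<Sum>j<N. (u j)\<^sup>2)))))
      \<longlonglongrightarrow> cmod (char (distr gauss borel (centred_chi2 u)) t - exp (- (t\<^sup>2 * (\<Sum>j. (u j)\<^sup>2))))"
    by (intro tendsto_intros summable_LIMSEQ sq)
  then show ?thesis
  proof (rule LIMSEQ_le_const2, intro exI allI impI)
    fix N
    have "(\<Sum>j<N. (u j)\<^sup>2) \<le> (\<Sum>j. (u j)\<^sup>2)"
      by (rule sum_le_suminf[OF sq]) auto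
    then show "cmod (char (distr gauss borel (?S N)) t - exp (- (t\<^sup>2 * (\<Sum>j<N. (u j)\<^sup>2)))) \<le> ?B * (\<Sum>j. (u j)\<^sup>2)"
      using char_centred_chi2_sum_approx[OF assms(1,2), where N=N and t=t] B by (meson mult_left_mono order_trans)
  qed
qed

text \<open>The normalisation \<open>\<Sum> u\<^sub>j\<^sup>2 = 1/2\<close> makes the variance one, as \<open>Var (\<xi>\<^sup>2 - 1) = 2\<close>.\<close>

lemma centred_chi2_tendsto_Phi:
  assumes "\<And>n j. 0 \<le> u n j" "\<And>n j. u n j \<le> umax n" "\<And>n. summable (u n)"
    and "\<And>n. (\<Sum>j. (u n j)\<^sup>2) = 1 / 2" and "umax \<longlonglongrightarrow> 0"
  shows "(\<lambda>n. gauss.prob {x \<in> space gauss. centred_chi2 (u n) x \<le> z}) \<longlonglongrightarrow> \<Phi> z"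
proof -
  have "weak_conv_m (\<lambda>n. distr gauss borel (centred_chi2 (u n))) std_normal_distribution"
  proof (rule levy_continuity)
    fix t
    let ?B = "\<lambda>n. (chi2_abs_moment3 * \<bar>t\<bar> ^ 3 * umax n / 6 + t ^ 4 * (umax n)\<^sup>2 / 2) * (1 / 2)"
    have "(\<lambda>n. char (distr gauss borel (centred_chi2 (u n))) t - char std_normal_distribution t) \<longlonglongrightarrow> 0"
    proof (rule Lim_null_comparison)
      show "\<forall>\<^sub>F n in sequentially.
          cmod (char (distr gauss borel (centred_chi2 (u n))) t - char std_normal_distribution t) \<le> ?B n"
        using char_centred_chi2_approx[OF assms(1-3), of _ t] assms(4)
        by (simp add: char_std_normal_distribution)
      have "?B \<longlonglongrightarrow> (chi2_abs_moment3 * \<bar>t\<bar> ^ 3 * 0 / 6 + t ^ 4 * 0\<^sup>2 / 2) * (1 / 2)"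
        by (intro tendsto_intros assms(5)) simp_all
      then show "?B \<longlonglongrightarrow> 0"
        by simp
    qed
    then show "(\<lambda>n. char (distr gauss borel (centred_chi2 (u n))) t) \<longlonglongrightarrow> char std_normal_distribution t"
      by (simp add: LIM_zero_iff)
  qed (simp_all add: real_dist_normal_dist)
  then have "(\<lambda>n. cdf (distr gauss borel (centred_chi2 (u n))) z) \<longlonglongrightarrow> \<Phi> z"
    unfolding weak_conv_m_def weak_conv_def using isCont_Phi by blast
  then show ?thesis
    by (simp add: cdf_def measure_distr vimage_def Int_def conj_commute)
qed

lemma monotone_close_to_Phi_between:
  fixes F :: "real \<Rightarrow> real"
  assumes "mono F" "a \<le> x" "x \<le> b" "b - a \<le> h"
    and "\<bar>F a - \<Phi> a\<bar> \<le> h" "\<bar>F b - \<Phi> b\<bar> \<le> h"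
  shows "\<bar>F x - \<Phi> x\<bar> \<le> 2 * h"
proof -
  have "F a \<le> F x" "F x \<le> F b"
    using assms(1-3) by (simp_all add: monoD)
  moreover have "\<Phi> b - \<Phi> x \<le> b - x" "\<Phi> x - \<Phi> a \<le> x - a"
    using Phi_diff_le assms(2,3) by simp_all
  ultimately show ?thesis
    using assms(2-6) unfolding abs_le_iff by linarith
qed

lemma monotone_close_to_Phi_on_grid:
  fixes F :: "real \<Rightarrow> real"
  assumes "mono F" "\<And>x. 0 \<le> F x" "\<And>x. F x \<le> 1" "0 < h"
    and "\<Phi> L \<le> h" "1 - h \<le> \<Phi> (L + real K * h)"
    and grid: "\<And>k. k \<le> K \<Longrightarrow> \<bar>F (L + real k * h) - \<Phi> (L + real k * h)\<bar> \<le> h"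
  shows "\<bar>F x - \<Phi> x\<bar> \<le> 2 * h"
proof -
  define g where "g k = L + real k * h" for k
  consider "x < g 0" | "g K \<le> x" | "g 0 \<le> x" "x < g K"
    by linarith
  then show ?thesis
  proof cases
    case 1
    then have "F x \<le> \<Phi> (g 0) + h" "\<Phi> x \<le> \<Phi> (g 0)"
      using monoD[OF assms(1), of x "g 0"] grid[of 0] std_normal.cdf_nondecreasing[of x "g 0"]
      by (auto simp: g_def abs_le_iff)
    then show ?thesis
      using assms(2)[of x] assms(4,5) std_normal.cdf_nonneg[of x] unfolding abs_le_iff g_def by simp
  next
    case 2
    then have "\<Phi> (g K) - h \<le> F x" "\<Phi> (g K) \<le> \<Phi> x"
      using monoD[OF assms(1), of "g K" x] grid[of K] std_normal.cdf_nondecreasing[of "g K" x]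
      by (auto simp: g_def abs_le_iff)
    then show ?thesis
      using assms(3)[of x] assms(4,6) std_normal.cdf_bounded_prob[of x] unfolding abs_le_iff g_def by simp
  next
    case 3
    define k where "k = nat \<lfloor>(x - L) / h\<rfloor>"
    have "0 \<le> (x - L) / h"
      using 3 \<open>0 < h\<close> by (simp add: g_def)
    then have "real k \<le> (x - L) / h" "(x - L) / h < real k + 1"
      unfolding k_def by linarith+
    then have k: "g k \<le> x" "x < g (Suc k)"
      using \<open>0 < h\<close> by (simp_all add: g_def field_simps)
    moreover have "Suc k \<le> K"
      using 3 k \<open>0 < h\<close> by (smt (verit) g_def mult_right_mono not_less_eq_eq of_nat_le_iff)
    ultimately show ?thesis
      using grid[of k] grid[of "Suc k"]
      by (intro monotone_close_to_Phi_between[OF assms(1), of "g k" x "g (Suc k)"])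
        (simp_all add: g_def algebra_simps)
  qed
qed

lemma polya_uniformly_tendsto_Phi:
  fixes F :: "nat \<Rightarrow> real \<Rightarrow> real"
  assumes "\<And>n. mono (F n)" "\<And>n x. 0 \<le> F n x" "\<And>n x. F n x \<le> 1"
    and "\<And>x. (\<lambda>n. F n x) \<longlonglongrightarrow> \<Phi> x" and "0 < e"
  shows "\<forall>\<^sub>F n in sequentially. \<forall>x. \<bar>F n x - \<Phi> x\<bar> \<le> e"
proof -
  define h where "h = e / 2"
  have "0 < h"
    using assms(5) by (simp add: h_def)
  obtain L where L: "\<Phi> L \<le> h"
    using eventually_happens'[OF _ order_tendstoD(2)[OF std_normal.cdf_lim_at_bot \<open>0 < h\<close>]]
    by (auto intro: less_imp_le)
  obtain L' where L': "\<And>x. L' \<le> x \<Longrightarrow> 1 - h \<le> \<Phi> x"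
    using order_tendstoD(1)[OF std_normal.cdf_lim_at_top_prob, of "1 - h"] \<open>0 < h\<close>
    by (auto simp: eventually_at_top_linorder intro: less_imp_le)
  define K where "K = nat \<lceil>(L' - L) / h\<rceil>"
  have "(L' - L) / h \<le> real K"
    unfolding K_def by linarith
  then have "L' \<le> L + real K * h"
    using \<open>0 < h\<close> by (simp add: field_simps)
  then have top: "1 - h \<le> \<Phi> (L + real K * h)"
    by (rule L')
  have "\<forall>\<^sub>F n in sequentially. \<forall>k\<in>{..K}. \<bar>F n (L + real k * h) - \<Phi> (L + real k * h)\<bar> \<le> h"
  proof (intro eventually_ball_finite ballI)
    fix k
    have "(\<lambda>n. \<bar>F n (L + real k * h) - \<Phi> (L + real k * h)\<bar>) \<longlonglongrightarrow> \<bar>\<Phi> (L + real k * h) - \<Phi> (L + real k * h)\<bar>"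
      by (intro tendsto_intros assms(4))
    then have "\<forall>\<^sub>F n in sequentially. \<bar>F n (L + real k * h) - \<Phi> (L + real k * h)\<bar> < h"
      using \<open>0 < h\<close> by (intro order_tendstoD(2)) simp_all
    then show "\<forall>\<^sub>F n in sequentially. \<bar>F n (L + real k * h) - \<Phi> (L + real k * h)\<bar> \<le> h"
      by eventually_elim simp
  qed simp
  then show ?thesis
  proof eventually_elim
    case (elim n)
    show ?case
      using monotone_close_to_Phi_on_grid[OF assms(1-3) \<open>0 < h\<close> L top] elim
      by (simp add: h_def)
  qed
qed

section \<open>The test statistic at a fixed sample size\<close>

definition chi2_sd :: "(nat \<Rightarrow> real) \<Rightarrow> real" where
  "chi2_sd u = sqrt (2 * (\<Sum>j. (u j)\<^sup>2))"

definition null_cdf :: "(nat \<Rightarrow> real) \<Rightarrow> real \<Rightarrow> real" where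
  "null_cdf u z = gauss.prob {x \<in> space gauss. centred_chi2 (\<lambda>j. u j / chi2_sd u) x \<le> z}"

definition max_weight_ratio :: "(nat \<Rightarrow> real) \<Rightarrow> real" where
  "max_weight_ratio u = u 0 / chi2_sd u"

definition null_sd :: "(nat \<Rightarrow> nat \<Rightarrow> real) \<Rightarrow> real \<Rightarrow> nat \<Rightarrow> real" where
  "null_sd w \<sigma> n = \<sigma>\<^sup>2 / real n * chi2_sd (w n)"

definition snr :: "(nat \<Rightarrow> nat \<Rightarrow> real) \<Rightarrow> real \<Rightarrow> nat \<Rightarrow> (nat \<Rightarrow> real) \<Rightarrow> real" where
  "snr w \<sigma> n \<theta> = (\<Sum>j. w n j * (\<theta> j)\<^sup>2) / null_sd w \<sigma> n"

definition cross_term :: "(nat \<Rightarrow> nat \<Rightarrow> real) \<Rightarrow> real \<Rightarrow> nat \<Rightarrow> (nat \<Rightarrow> real) \<Rightarrow> (nat \<Rightarrow> real) \<Rightarrow> real" where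
  "cross_term w \<sigma> n \<theta> x = 2 * (\<sigma> / sqrt (real n)) * (\<Sum>j. w n j * \<theta> j * x j) / null_sd w \<sigma> n"

lemma measurable_Tstat [measurable]: "Tstat w \<sigma> n \<theta> \<in> borel_measurable gauss"
  unfolding Tstat_def by measurable

lemma measurable_cross_term [measurable]: "cross_term w \<sigma> n \<theta> \<in> borel_measurable gauss"
  unfolding cross_term_def by measurable

lemma null_cdf_mono: "y \<le> z \<Longrightarrow> null_cdf u y \<le> null_cdf u z"
  unfolding null_cdf_def by (rule gauss.finite_measure_mono) auto

lemma null_cdf_nonneg: "0 \<le> null_cdf u z"
  by (simp add: null_cdf_def)

lemma null_cdf_le_1: "null_cdf u z \<le> 1"
  by (simp add: null_cdf_def)

locale weighted_chi2_test =
  fixes w :: "nat \<Rightarrow> nat \<Rightarrow> real" and \<sigma> :: real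
  assumes sigma_pos: "0 < \<sigma>"
    and weights_nonneg: "\<And>n j. 1 \<le> n \<Longrightarrow> 0 \<le> w n j"
    and weights_summable: "\<And>n. 1 \<le> n \<Longrightarrow> summable (w n)"
    and weights_le_first: "\<And>n j. 1 \<le> n \<Longrightarrow> w n j \<le> w n 0"
    and weights_sq_pos: "\<And>n. 1 \<le> n \<Longrightarrow> 0 < (\<Sum>j. (w n j)\<^sup>2)"
begin

lemma chi2_sd_pos: "1 \<le> n \<Longrightarrow> 0 < chi2_sd (w n)"
  by (simp add: chi2_sd_def weights_sq_pos)

lemma null_sd_pos: "1 \<le> n \<Longrightarrow> 0 < null_sd w \<sigma> n"
  using sigma_pos by (simp add: null_sd_def chi2_sd_pos)

lemma max_weight_ratio_nonneg: "1 \<le> n \<Longrightarrow> 0 \<le> max_weight_ratio (w n)"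
  by (simp add: max_weight_ratio_def chi2_sd_pos less_imp_le weights_nonneg)

lemma summable_weighted_sq:
  assumes "1 \<le> n" "summable (\<lambda>j. (\<theta> j)\<^sup>2)"
  shows "summable (\<lambda>j. w n j * (\<theta> j)\<^sup>2)"
  by (rule summable_comparison_test[OF _ summable_mult[OF assms(2), of "w n 0"]])
    (use assms weights_nonneg weights_le_first in \<open>auto intro!: mult_right_mono\<close>)

lemma summable_weights_sq: "1 \<le> n \<Longrightarrow> summable (\<lambda>j. (w n j)\<^sup>2)"
  by (intro summable_sq_if_bounded[where umax="w n 0"] weights_nonneg weights_le_first weights_summable)

lemma snr_nonneg: "1 \<le> n \<Longrightarrow> l2 \<theta> \<Longrightarrow> 0 \<le> snr w \<sigma> n \<theta>"
  unfolding snr_def l2_def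
  by (intro divide_nonneg_pos suminf_nonneg summable_weighted_sq null_sd_pos)
    (auto simp: weights_nonneg)

lemma snr_scale:
  assumes "1 \<le> n" "l2 \<theta>"
  shows "snr w \<sigma> n (\<lambda>j. c * \<theta> j) = c\<^sup>2 * snr w \<sigma> n \<theta>"
  using summable_weighted_sq[OF assms(1) assms(2)[unfolded l2_def]]
  by (simp add: snr_def power_mult_distrib suminf_mult[symmetric] algebra_simps)

lemma summable_weighted_cross:
  assumes "1 \<le> n" "l2 \<theta>" "summable (\<lambda>j. w n j * (x j)\<^sup>2)"
  shows "summable (\<lambda>j. w n j * \<theta> j * x j)"
proof (rule summable_comparison_test)
  show "summable (\<lambda>j. w n j * (\<theta> j)\<^sup>2 + w n j * (x j)\<^sup>2)"
    using summable_add[OF summable_weighted_sq[OF assms(1) assms(2)[unfolded l2_def]] assms(3)] .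
  have "2 * \<bar>\<theta> j * x j\<bar> \<le> (\<theta> j)\<^sup>2 + (x j)\<^sup>2" for j
    using sum_squares_bound[of "\<bar>\<theta> j\<bar>" "\<bar>x j\<bar>"] by (simp add: abs_mult)
  then have "w n j * \<bar>\<theta> j * x j\<bar> \<le> w n j * (\<theta> j)\<^sup>2 + w n j * (x j)\<^sup>2" for j
    using weights_nonneg[OF assms(1), of j] mult_left_mono[of "2 * \<bar>\<theta> j * x j\<bar>" _ "w n j"]
    by (smt (verit, best) distrib_left mult_nonneg_nonneg abs_ge_zero)
  then show "\<exists>N. \<forall>j\<ge>N. norm (w n j * \<theta> j * x j) \<le> w n j * (\<theta> j)\<^sup>2 + w n j * (x j)\<^sup>2"
    using weights_nonneg[OF assms(1)] by (auto simp: abs_mult mult.assoc)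
qed

lemma Tstat_eq:
  assumes "1 \<le> n" "l2 \<theta>" "summable (\<lambda>j. w n j * (x j)\<^sup>2)"
  shows "Tstat w \<sigma> n \<theta> x = null_sd w \<sigma> n *
    (centred_chi2 (\<lambda>j. w n j / chi2_sd (w n)) x + snr w \<sigma> n \<theta> + cross_term w \<sigma> n \<theta> x)"
proof -
  define s where "s = \<sigma> / sqrt (real n)"
  define A where "A = (\<Sum>j. w n j * (\<theta> j)\<^sup>2)"
  define B where "B = (\<Sum>j. w n j * \<theta> j * x j)"
  define Q where "Q = (\<Sum>j. w n j * (x j)\<^sup>2)"
  have s2: "s\<^sup>2 = \<sigma>\<^sup>2 / real n" and "0 < s"
    using assms(1) sigma_pos by (simp_all add: s_def power_divide)
  have sA: "summable (\<lambda>j. w n j * (\<theta> j)\<^sup>2)"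
    using assms(1,2) by (simp add: l2_def summable_weighted_sq)
  note sB = summable_weighted_cross[OF assms]
  have "(\<Sum>j. w n j * (\<theta> j + s * x j)\<^sup>2)
      = (\<Sum>j. w n j * (\<theta> j)\<^sup>2 + 2 * s * (w n j * \<theta> j * x j) + s\<^sup>2 * (w n j * (x j)\<^sup>2))"
    by (simp add: power2_eq_square algebra_simps)
  also have "\<dots> = A + 2 * s * B + s\<^sup>2 * Q"
    unfolding A_def B_def Q_def
    using suminf_add[OF summable_add[OF sA summable_mult[OF sB]] summable_mult[OF assms(3)]]
      suminf_add[OF sA summable_mult[OF sB]]
    by (simp add: suminf_mult[OF sB] suminf_mult[OF assms(3)])
  finally have T: "Tstat w \<sigma> n \<theta> x = A + 2 * s * B + s\<^sup>2 * Q - s\<^sup>2 * rho w n"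
    by (simp add: Tstat_def s_def[symmetric] s2)
  have "centred_chi2 (\<lambda>j. w n j / chi2_sd (w n)) x = (\<Sum>j. (w n j * (x j)\<^sup>2 - w n j) / chi2_sd (w n))"
    unfolding centred_chi2_def by (simp add: algebra_simps diff_divide_distrib)
  also have "\<dots> = (Q - rho w n) / chi2_sd (w n)"
    unfolding Q_def rho_def
    using summable_diff[OF assms(3) weights_summable[OF assms(1)]]
    by (simp add: suminf_divide suminf_diff[OF assms(3) weights_summable[OF assms(1)]])
  finally have U: "centred_chi2 (\<lambda>j. w n j / chi2_sd (w n)) x = (Q - rho w n) / chi2_sd (w n)" .
  show ?thesis
    unfolding T U snr_def cross_term_def A_def[symmetric] B_def[symmetric] s_def[symmetric]
    using chi2_sd_pos[OF assms(1)] \<open>0 < s\<close>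
    by (simp add: null_sd_def s2[symmetric] field_simps)
qed

lemma AE_Tstat_eq:
  assumes "1 \<le> n" "l2 \<theta>"
  shows "AE x in gauss. Tstat w \<sigma> n \<theta> x = null_sd w \<sigma> n *
    (centred_chi2 (\<lambda>j. w n j / chi2_sd (w n)) x + snr w \<sigma> n \<theta> + cross_term w \<sigma> n \<theta> x)"
  using AE_gauss_summable_weighted_sq[OF weights_nonneg weights_summable, OF assms(1) assms(1)]
  by eventually_elim (rule Tstat_eq[OF assms])

lemma alpha_err_eq:
  assumes "1 \<le> n"
  shows "alpha_err w \<sigma> n t = 1 - null_cdf (w n) (t / null_sd w \<sigma> n)"
proof -
  have "l2 (\<lambda>_. 0)" "snr w \<sigma> n (\<lambda>_. 0) = 0" "cross_term w \<sigma> n (\<lambda>_. 0) x = 0" for x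
    by (simp_all add: l2_def snr_def cross_term_def)
  then have null: "AE x in gauss.
      Tstat w \<sigma> n (\<lambda>_. 0) x = null_sd w \<sigma> n * centred_chi2 (\<lambda>j. w n j / chi2_sd (w n)) x"
    using AE_Tstat_eq[OF assms, of "\<lambda>_. 0"] by simp
  have "alpha_err w \<sigma> n t
      = gauss.prob {x \<in> space gauss. t / null_sd w \<sigma> n < centred_chi2 (\<lambda>j. w n j / chi2_sd (w n)) x}"
    unfolding alpha_err_def
  proof (rule measure_eq_AE)
    show "AE x in gauss. x \<in> {x \<in> space gauss. t < Tstat w \<sigma> n (\<lambda>_. 0) x} \<longleftrightarrow>
        x \<in> {x \<in> space gauss. t / null_sd w \<sigma> n < centred_chi2 (\<lambda>j. w n j / chi2_sd (w n)) x}"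
      using null by eventually_elim (use null_sd_pos[OF assms] in \<open>simp add: divide_less_eq mult.commute\<close>)
  qed measurable
  also have "\<dots> = 1 - null_cdf (w n) (t / null_sd w \<sigma> n)"
    unfolding null_cdf_def by (subst gauss.prob_compl[symmetric]) (auto intro!: arg_cong[where f="gauss.prob"])
  finally show ?thesis .
qed

lemma weighted_signal_sq_le:
  assumes "1 \<le> n" "l2 \<theta>"
  shows "summable (\<lambda>j. (w n j * \<theta> j)\<^sup>2)" "(\<Sum>j. (w n j * \<theta> j)\<^sup>2) \<le> w n 0 * (\<Sum>j. w n j * (\<theta> j)\<^sup>2)"
proof -
  have sq: "(w n j * \<theta> j)\<^sup>2 \<le> w n 0 * (w n j * (\<theta> j)\<^sup>2)" for j
  proof -
    have "(w n j * \<theta> j)\<^sup>2 = w n j * (w n j * (\<theta> j)\<^sup>2)"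
      by (simp add: power2_eq_square)
    also have "\<dots> \<le> w n 0 * (w n j * (\<theta> j)\<^sup>2)"
      using weights_nonneg[OF assms(1), of j] weights_le_first[OF assms(1), of j]
      by (intro mult_right_mono) simp_all
    finally show ?thesis .
  qed
  have sA: "summable (\<lambda>j. w n j * (\<theta> j)\<^sup>2)"
    using assms by (simp add: l2_def summable_weighted_sq)
  show "summable (\<lambda>j. (w n j * \<theta> j)\<^sup>2)"
    by (rule summable_comparison_test[OF _ summable_mult[OF sA, of "w n 0"]]) (use sq in auto)
  then show "(\<Sum>j. (w n j * \<theta> j)\<^sup>2) \<le> w n 0 * (\<Sum>j. w n j * (\<theta> j)\<^sup>2)"
    using suminf_le[OF sq _ summable_mult[OF sA]] suminf_mult[OF sA, of "w n 0"] by simp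
qed

lemma cross_term_tail:
  assumes "1 \<le> n" "l2 \<theta>" "0 < d"
  shows "gauss.prob {x \<in> space gauss. d \<le> \<bar>cross_term w \<sigma> n \<theta> x\<bar>}
    \<le> 4 * max_weight_ratio (w n) * snr w \<sigma> n \<theta> / d\<^sup>2"
proof -
  define s where "s = \<sigma> / sqrt (real n)"
  define c where "c = d * null_sd w \<sigma> n / (2 * s)"
  have s: "0 < s" "s\<^sup>2 = \<sigma>\<^sup>2 / real n"
    using assms(1) sigma_pos by (simp_all add: s_def power_divide)
  have c: "0 < c"
    using assms(3) null_sd_pos[OF assms(1)] s by (simp add: c_def)
  note signal = weighted_signal_sq_le[OF assms(1,2)]
  have "AE x in gauss. summable (\<lambda>j. (w n j * \<theta> j) * x j)"
    using AE_gauss_summable_weighted_sq[OF weights_nonneg weights_summable, OF assms(1) assms(1)]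
    by eventually_elim (simp add: summable_weighted_cross[OF assms(1,2)])
  then have "gauss.prob {x \<in> space gauss. c \<le> \<bar>\<Sum>j. (w n j * \<theta> j) * x j\<bar>} \<le> (\<Sum>j. (w n j * \<theta> j)\<^sup>2) / c\<^sup>2"
    by (rule gauss_linear_series_tail[OF _ signal(1) c])
  also have "\<dots> \<le> w n 0 * (\<Sum>j. w n j * (\<theta> j)\<^sup>2) / c\<^sup>2"
    using signal(2) by (simp add: divide_right_mono)
  also have "\<dots> = 4 * max_weight_ratio (w n) * snr w \<sigma> n \<theta> / d\<^sup>2"
  proof -
    have "c\<^sup>2 = d\<^sup>2 * (null_sd w \<sigma> n)\<^sup>2 / (4 * s\<^sup>2)"
      by (simp add: c_def power_divide power_mult_distrib)
    also have "\<dots> = d\<^sup>2 * (\<sigma>\<^sup>2 / real n) * (chi2_sd (w n))\<^sup>2 / 4"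
      unfolding s(2) using assms(1) sigma_pos by (simp add: null_sd_def field_simps power2_eq_square)
    finally have c2: "c\<^sup>2 = d\<^sup>2 * (\<sigma>\<^sup>2 / real n) * (chi2_sd (w n))\<^sup>2 / 4" .
    show ?thesis
      unfolding c2 using assms chi2_sd_pos[OF assms(1)] sigma_pos
      by (simp add: max_weight_ratio_def snr_def null_sd_def field_simps power2_eq_square)
  qed
  also have "{x \<in> space gauss. c \<le> \<bar>\<Sum>j. (w n j * \<theta> j) * x j\<bar>}
      = {x \<in> space gauss. d \<le> \<bar>cross_term w \<sigma> n \<theta> x\<bar>}"
    using s null_sd_pos[OF assms(1)]
    by (auto simp: cross_term_def c_def s_def[symmetric] abs_mult abs_divide field_simps mult.assoc)
  finally show ?thesis .
qed


lemma AE_Tstat_le_iff: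
  assumes "1 \<le> n" "l2 \<theta>"
  shows "AE x in gauss. Tstat w \<sigma> n \<theta> x \<le> t \<longleftrightarrow>
    centred_chi2 (\<lambda>j. w n j / chi2_sd (w n)) x + snr w \<sigma> n \<theta> + cross_term w \<sigma> n \<theta> x \<le> t / null_sd w \<sigma> n"
  using AE_Tstat_eq[OF assms]
  by eventually_elim (use null_sd_pos[OF assms(1)] in \<open>simp add: le_divide_eq mult.commute\<close>)

lemma beta_err_le:
  assumes "1 \<le> n" "l2 \<theta>" "0 < snr w \<sigma> n \<theta>"
  shows "beta_err w \<sigma> n \<theta> t
    \<le> null_cdf (w n) (t / null_sd w \<sigma> n - snr w \<sigma> n \<theta> / 2) + 16 * max_weight_ratio (w n) / snr w \<sigma> n \<theta>"
proof -
  let ?U = "centred_chi2 (\<lambda>j. w n j / chi2_sd (w n))" and ?D = "snr w \<sigma> n \<theta>"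
  let ?A = "{x \<in> space gauss. ?U x \<le> t / null_sd w \<sigma> n - ?D / 2}"
  let ?B = "{x \<in> space gauss. ?D / 2 \<le> \<bar>cross_term w \<sigma> n \<theta> x\<bar>}"
  have "beta_err w \<sigma> n \<theta> t \<le> gauss.prob (?A \<union> ?B)"
    unfolding beta_err_def
  proof (rule gauss.finite_measure_mono_AE)
    show "AE x in gauss. x \<in> {x \<in> space gauss. Tstat w \<sigma> n \<theta> x \<le> t} \<longrightarrow> x \<in> ?A \<union> ?B"
      using AE_Tstat_le_iff[OF assms(1,2), of t]
      by eventually_elim (auto simp: abs_le_iff not_le)
  qed measurable
  also have "\<dots> \<le> gauss.prob ?A + gauss.prob ?B"
    by (rule measure_Un_le) measurable
  also have "gauss.prob ?B \<le> 4 * max_weight_ratio (w n) * ?D / (?D / 2)\<^sup>2"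
    using assms by (intro cross_term_tail) simp_all
  also have "4 * max_weight_ratio (w n) * ?D / (?D / 2)\<^sup>2 = 16 * max_weight_ratio (w n) / ?D"
    using assms(3) by (simp add: field_simps power2_eq_square)
  finally show ?thesis
    by (simp add: null_cdf_def)
qed

lemma beta_err_ge:
  assumes "1 \<le> n" "l2 \<theta>" "0 < d"
  shows "null_cdf (w n) (t / null_sd w \<sigma> n - snr w \<sigma> n \<theta> - d)
      - 4 * max_weight_ratio (w n) * snr w \<sigma> n \<theta> / d\<^sup>2 \<le> beta_err w \<sigma> n \<theta> t"
proof -
  let ?U = "centred_chi2 (\<lambda>j. w n j / chi2_sd (w n))" and ?D = "snr w \<sigma> n \<theta>"
  let ?A = "{x \<in> space gauss. ?U x \<le> t / null_sd w \<sigma> n - ?D - d}"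
  let ?B = "{x \<in> space gauss. Tstat w \<sigma> n \<theta> x \<le> t}"
  let ?C = "{x \<in> space gauss. d \<le> \<bar>cross_term w \<sigma> n \<theta> x\<bar>}"
  have "gauss.prob ?A \<le> gauss.prob (?B \<union> ?C)"
  proof (rule gauss.finite_measure_mono_AE)
    show "AE x in gauss. x \<in> ?A \<longrightarrow> x \<in> ?B \<union> ?C"
      using AE_Tstat_le_iff[OF assms(1,2), of t]
      by eventually_elim (auto simp: abs_le_iff not_le)
  qed measurable
  also have "\<dots> \<le> gauss.prob ?B + gauss.prob ?C"
    by (rule measure_Un_le) measurable
  also have "gauss.prob ?C \<le> 4 * max_weight_ratio (w n) * ?D / d\<^sup>2"
    by (rule cross_term_tail[OF assms])
  finally show ?thesis
    by (simp add: null_cdf_def beta_err_def)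
qed

end

section \<open>Consistency and inconsistency in terms of the signal-to-noise ratio\<close>

lemma filterlim_subseq_idx: "subseq_idx ns \<Longrightarrow> filterlim ns sequentially sequentially"
  unfolding subseq_idx_def by (simp add: filterlim_subseq)

lemma subseq_idx_ge_1: "subseq_idx ns \<Longrightarrow> 1 \<le> ns i"
  unfolding subseq_idx_def by (metis le_trans strict_mono_less_eq zero_le)

lemma one_le_liminf_ereal:
  fixes X :: "nat \<Rightarrow> real"
  assumes "\<And>e. 0 < e \<Longrightarrow> \<forall>\<^sub>F i in sequentially. 1 - e \<le> X i"
  shows "1 \<le> liminf (\<lambda>i. ereal (X i))"
proof (subst le_Liminf_iff, intro allI impI)
  fix y :: ereal
  assume "y < 1"
  obtain q where "y \<le> ereal q" "q < 1"
  proof (cases y)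
    case (real r)
    then show ?thesis
      using that[of r] \<open>y < 1\<close> by simp
  qed (use that[of 0] \<open>y < 1\<close> in auto)
  have "\<forall>\<^sub>F i in sequentially. q < X i"
    using assms[of "(1 - q) / 2"] \<open>q < 1\<close> by (auto elim!: eventually_mono simp: field_simps)
  then show "\<forall>\<^sub>F i in sequentially. y < ereal (X i)"
    by eventually_elim (use \<open>y \<le> ereal q\<close> in \<open>auto intro: le_less_trans\<close>)
qed

lemma liminf_ereal_less_1:
  fixes X :: "nat \<Rightarrow> real"
  assumes "\<exists>\<^sub>F i in sequentially. X i \<le> c" "c < 1"
  shows "liminf (\<lambda>i. ereal (X i)) < 1"
proof (rule ccontr)
  assume "\<not> liminf (\<lambda>i. ereal (X i)) < 1"
  moreover have c: "ereal c < 1"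
    using assms(2) by simp
  ultimately have "ereal c < liminf (\<lambda>i. ereal (X i))"
    using less_le_trans[OF c] by (simp add: not_less)
  then have "\<forall>\<^sub>F i in sequentially. c < X i"
    by (auto dest: less_LiminfD)
  then show False
    using assms(1) by (simp add: frequently_def not_le)
qed

lemma frequently_ge_if_not_tendsto_0:
  fixes X :: "nat \<Rightarrow> real"
  assumes "\<not> X \<longlonglongrightarrow> 0"
  obtains \<epsilon> where "0 < \<epsilon>" "\<exists>\<^sub>F i in sequentially. \<epsilon> \<le> \<bar>X i\<bar>"
  using assms unfolding tendsto_iff dist_real_def
  by (auto simp: frequently_def not_le)

lemma Phi_bounded_preimage:
  assumes "0 < p" "q < 1"
  obtains K where "\<And>z. p \<le> \<Phi> z \<Longrightarrow> \<Phi> z \<le> q \<Longrightarrow> \<bar>z\<bar> \<le> K"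
proof -
  obtain K1 where K1: "\<And>z. z \<le> K1 \<Longrightarrow> \<Phi> z < p"
    using order_tendstoD(2)[OF std_normal.cdf_lim_at_bot assms(1)]
    by (auto simp: eventually_at_bot_linorder)
  obtain K2 where K2: "\<And>z. K2 \<le> z \<Longrightarrow> q < \<Phi> z"
    using order_tendstoD(1)[OF std_normal.cdf_lim_at_top_prob assms(2)]
    by (auto simp: eventually_at_top_linorder)
  show ?thesis
  proof (rule that[of "max (- K1) K2"])
    fix z
    assume "p \<le> \<Phi> z" "\<Phi> z \<le> q"
    then have "K1 < z" "z < K2"
      using K1[of z] K2[of z] by (auto simp: not_le[symmetric])
    then show "\<bar>z\<bar> \<le> max (- K1) K2"
      by auto
  qed
qed

lemma Phi_increment_lower_bound:
  assumes "0 < p" "q < 1" "0 < \<delta>"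
  obtains \<Gamma> where "0 < \<Gamma>" "\<And>z. p \<le> \<Phi> z \<Longrightarrow> \<Phi> z \<le> q \<Longrightarrow> \<Gamma> \<le> \<Phi> z - \<Phi> (z - \<delta>)"
proof -
  obtain K where K: "\<And>z. p \<le> \<Phi> z \<Longrightarrow> \<Phi> z \<le> q \<Longrightarrow> \<bar>z\<bar> \<le> K"
    using Phi_bounded_preimage[OF assms(1,2)] by blast
  show ?thesis
  proof (rule that)
    show "0 < \<delta> * std_normal_density (K + \<delta>)"
      using assms(3) by (simp add: normal_density_pos)
    fix z
    assume "p \<le> \<Phi> z" "\<Phi> z \<le> q"
    then have "\<bar>z - \<delta>\<bar> \<le> K + \<delta>" "\<bar>z\<bar> \<le> K + \<delta>"
      using K assms(3) by fastforce+
    from Phi_diff_ge[OF _ this] show "\<delta> * std_normal_density (K + \<delta>) \<le> \<Phi> z - \<Phi> (z - \<delta>)"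
      using assms(3) by simp
  qed
qed

locale asymptotic_weighted_chi2_test = weighted_chi2_test +
  assumes max_weight_ratio_tendsto_0: "(\<lambda>n. max_weight_ratio (w n)) \<longlonglongrightarrow> 0"
begin

lemma null_cdf_tendsto_Phi: "(\<lambda>n. null_cdf (w (Suc n)) z) \<longlonglongrightarrow> \<Phi> z"
  unfolding null_cdf_def
proof (rule centred_chi2_tendsto_Phi[where umax="\<lambda>n. max_weight_ratio (w (Suc n))"])
  fix n j
  have n: "1 \<le> Suc n"
    by simp
  show "0 \<le> w (Suc n) j / chi2_sd (w (Suc n))" "summable (\<lambda>j. w (Suc n) j / chi2_sd (w (Suc n)))"
    using weights_nonneg[OF n] weights_summable[OF n] chi2_sd_pos[OF n] by (simp_all add: summable_divide)
  show "w (Suc n) j / chi2_sd (w (Suc n)) \<le> max_weight_ratio (w (Suc n))"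
    unfolding max_weight_ratio_def using weights_le_first[OF n] chi2_sd_pos[OF n] by (simp add: divide_right_mono)
  have "(\<Sum>j. (w (Suc n) j / chi2_sd (w (Suc n)))\<^sup>2) = (\<Sum>j. (w (Suc n) j)\<^sup>2) / (chi2_sd (w (Suc n)))\<^sup>2"
    by (simp add: power_divide suminf_divide[OF summable_weights_sq[OF n]])
  then show "(\<Sum>j. (w (Suc n) j / chi2_sd (w (Suc n)))\<^sup>2) = 1 / 2"
    using weights_sq_pos[OF n] by (simp add: chi2_sd_def)
next
  show "(\<lambda>n. max_weight_ratio (w (Suc n))) \<longlonglongrightarrow> 0"
    using max_weight_ratio_tendsto_0 by (rule LIMSEQ_Suc)
qed

lemma null_cdf_uniformly_tendsto_Phi:
  assumes "0 < e"
  shows "\<forall>\<^sub>F n in sequentially. \<forall>z. \<bar>null_cdf (w n) z - \<Phi> z\<bar> \<le> e"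
proof -
  have "\<forall>\<^sub>F n in sequentially. \<forall>z. \<bar>null_cdf (w (Suc n)) z - \<Phi> z\<bar> \<le> e"
    using null_cdf_tendsto_Phi assms
    by (intro polya_uniformly_tendsto_Phi) (simp_all add: mono_def null_cdf_mono null_cdf_nonneg null_cdf_le_1)
  then show ?thesis
    by (rule eventually_sequentially_Suc[THEN iffD1])
qed


lemma error_sum_ge_if_snr_small:
  assumes "0 < e"
  shows "\<forall>\<^sub>F n in sequentially. \<forall>\<theta> t. l2 \<theta> \<longrightarrow> snr w \<sigma> n \<theta> \<le> e / 4 \<longrightarrow>
    1 - e \<le> alpha_err w \<sigma> n t + beta_err w \<sigma> n \<theta> t"
proof -
  define d where "d = e / 4"
  have "(\<lambda>n. 4 * max_weight_ratio (w n) * d / d\<^sup>2) \<longlonglongrightarrow> 4 * 0 * d / d\<^sup>2"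
    by (intro tendsto_intros max_weight_ratio_tendsto_0) (use assms in \<open>simp add: d_def\<close>)
  then have "\<forall>\<^sub>F n in sequentially. 4 * max_weight_ratio (w n) * d / d\<^sup>2 < e / 4"
    by (rule order_tendstoD(2)) (use assms in simp)
  moreover have "\<forall>\<^sub>F n in sequentially. \<forall>z. \<bar>null_cdf (w n) z - \<Phi> z\<bar> \<le> e / 8"
    using assms by (intro null_cdf_uniformly_tendsto_Phi) simp
  ultimately show ?thesis
    using eventually_ge_at_top[of 1]
  proof eventually_elim
    case (elim n)
    show ?case
    proof (intro allI impI)
      fix \<theta> t
      assume "l2 \<theta>" and small: "snr w \<sigma> n \<theta> \<le> e / 4"
      let ?z = "t / null_sd w \<sigma> n" and ?D = "snr w \<sigma> n \<theta>"
      have "0 \<le> ?D"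
        using elim(3) \<open>l2 \<theta>\<close> by (rule snr_nonneg)
      have "null_cdf (w n) (?z - ?D - d) - 4 * max_weight_ratio (w n) * ?D / d\<^sup>2 \<le> beta_err w \<sigma> n \<theta> t"
        using elim(3) \<open>l2 \<theta>\<close> assms by (intro beta_err_ge) (simp_all add: d_def)
      moreover have "4 * max_weight_ratio (w n) * ?D / d\<^sup>2 \<le> 4 * max_weight_ratio (w n) * d / d\<^sup>2"
        using small max_weight_ratio_nonneg[OF elim(3)]
        by (intro divide_right_mono mult_left_mono) (simp_all add: d_def)
      moreover have "\<Phi> ?z - \<Phi> (?z - ?D - d) \<le> ?D + d"
        using Phi_diff_le[of "?z - ?D - d" ?z] \<open>0 \<le> ?D\<close> assms by (simp add: d_def)
      moreover have "\<bar>null_cdf (w n) ?z - \<Phi> ?z\<bar> \<le> e / 8"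
        "\<bar>null_cdf (w n) (?z - ?D - d) - \<Phi> (?z - ?D - d)\<bar> \<le> e / 8"
        using elim(2) by blast+
      ultimately show "1 - e \<le> alpha_err w \<sigma> n t + beta_err w \<sigma> n \<theta> t"
        using alpha_err_eq[OF elim(3), of t] elim(1) small unfolding abs_le_iff d_def by linarith
    qed
  qed
qed

lemma inconsistent_if_snr_tendsto_0:
  assumes ns: "filterlim ns sequentially sequentially" and g: "\<And>i. l2 (g i)"
    and snr: "(\<lambda>i. snr w \<sigma> (ns i) (g i)) \<longlonglongrightarrow> 0"
  shows "inconsistent w \<sigma> ns g"
  unfolding inconsistent_def
proof (intro allI one_le_liminf_ereal)
  fix t :: "nat \<Rightarrow> real" and e :: real
  assume "0 < e"
  have "\<forall>\<^sub>F i in sequentially. snr w \<sigma> (ns i) (g i) < e / 4"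
    using \<open>0 < e\<close> by (intro order_tendstoD(2)[OF snr]) simp
  with eventually_compose_filterlim[OF error_sum_ge_if_snr_small[OF \<open>0 < e\<close>] ns]
  show "\<forall>\<^sub>F i in sequentially. 1 - e \<le> alpha_err w \<sigma> (ns i) (t i) + beta_err w \<sigma> (ns i) (g i) (t i)"
    by eventually_elim (use g in \<open>simp add: less_imp_le\<close>)
qed

lemma error_sum_le_if_snr_large:
  assumes "0 < \<epsilon>"
  obtains \<gamma> where "0 < \<gamma>" "\<forall>\<^sub>F n in sequentially. \<forall>\<theta>. l2 \<theta> \<longrightarrow> \<epsilon> \<le> snr w \<sigma> n \<theta> \<longrightarrow>
    alpha_err w \<sigma> n 0 + beta_err w \<sigma> n \<theta> 0 \<le> 1 - \<gamma>"
proof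
  define \<gamma> where "\<gamma> = \<epsilon> / 2 * std_normal_density (\<epsilon> / 2)"
  show "0 < \<gamma> / 2"
    using assms by (simp add: \<gamma>_def normal_density_pos)
  have gap: "\<gamma> \<le> \<Phi> 0 - \<Phi> (- \<epsilon> / 2)"
    using Phi_diff_ge[of "- \<epsilon> / 2" 0 "\<epsilon> / 2"] assms by (simp add: \<gamma>_def)
  have "(\<lambda>n. 16 * max_weight_ratio (w n) / \<epsilon>) \<longlonglongrightarrow> 16 * 0 / \<epsilon>"
    by (intro tendsto_intros max_weight_ratio_tendsto_0) (use assms in simp)
  then have "\<forall>\<^sub>F n in sequentially. 16 * max_weight_ratio (w n) / \<epsilon> < \<gamma> / 4"
    by (rule order_tendstoD(2)) (use \<open>0 < \<gamma> / 2\<close> in simp)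
  moreover have "\<forall>\<^sub>F n in sequentially. \<forall>z. \<bar>null_cdf (w n) z - \<Phi> z\<bar> \<le> \<gamma> / 8"
    using \<open>0 < \<gamma> / 2\<close> by (intro null_cdf_uniformly_tendsto_Phi) simp
  ultimately show "\<forall>\<^sub>F n in sequentially. \<forall>\<theta>. l2 \<theta> \<longrightarrow> \<epsilon> \<le> snr w \<sigma> n \<theta> \<longrightarrow>
      alpha_err w \<sigma> n 0 + beta_err w \<sigma> n \<theta> 0 \<le> 1 - \<gamma> / 2"
    using eventually_ge_at_top[of 1]
  proof eventually_elim
    case (elim n)
    show ?case
    proof (intro allI impI)
      fix \<theta>
      assume "l2 \<theta>" and large: "\<epsilon> \<le> snr w \<sigma> n \<theta>"
      let ?D = "snr w \<sigma> n \<theta>"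
      have "beta_err w \<sigma> n \<theta> 0 \<le> null_cdf (w n) (- ?D / 2) + 16 * max_weight_ratio (w n) / ?D"
        using beta_err_le[OF elim(3) \<open>l2 \<theta>\<close>, where t=0] assms large by simp
      moreover have "null_cdf (w n) (- ?D / 2) \<le> null_cdf (w n) (- \<epsilon> / 2)"
        using large by (intro null_cdf_mono) simp
      moreover have "16 * max_weight_ratio (w n) / ?D \<le> 16 * max_weight_ratio (w n) / \<epsilon>"
        using large assms max_weight_ratio_nonneg[OF elim(3)] by (intro divide_left_mono) simp_all
      moreover have "\<bar>null_cdf (w n) 0 - \<Phi> 0\<bar> \<le> \<gamma> / 8"
        "\<bar>null_cdf (w n) (- \<epsilon> / 2) - \<Phi> (- \<epsilon> / 2)\<bar> \<le> \<gamma> / 8"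
        using elim(2) by blast+
      ultimately show "alpha_err w \<sigma> n 0 + beta_err w \<sigma> n \<theta> 0 \<le> 1 - \<gamma> / 2"
        using alpha_err_eq[OF elim(3), of 0] elim(1) gap unfolding abs_le_iff by simp
    qed
  qed
qed

lemma snr_tendsto_0_if_inconsistent:
  assumes ns: "filterlim ns sequentially sequentially" and g: "\<And>i. l2 (g i)"
    and inconsistent: "inconsistent w \<sigma> ns g"
  shows "(\<lambda>i. snr w \<sigma> (ns i) (g i)) \<longlonglongrightarrow> 0"
proof (rule ccontr)
  assume "\<not> ?thesis"
  then obtain \<epsilon> where "0 < \<epsilon>" and large: "\<exists>\<^sub>F i in sequentially. \<epsilon> \<le> \<bar>snr w \<sigma> (ns i) (g i)\<bar>"
    by (rule frequently_ge_if_not_tendsto_0)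
  obtain \<gamma> where "0 < \<gamma>" and errors: "\<forall>\<^sub>F n in sequentially. \<forall>\<theta>. l2 \<theta> \<longrightarrow> \<epsilon> \<le> snr w \<sigma> n \<theta> \<longrightarrow>
      alpha_err w \<sigma> n 0 + beta_err w \<sigma> n \<theta> 0 \<le> 1 - \<gamma>"
    using error_sum_le_if_snr_large[OF \<open>0 < \<epsilon>\<close>] by blast
  have "\<forall>\<^sub>F i in sequentially. \<epsilon> \<le> \<bar>snr w \<sigma> (ns i) (g i)\<bar> \<longrightarrow>
      alpha_err w \<sigma> (ns i) 0 + beta_err w \<sigma> (ns i) (g i) 0 \<le> 1 - \<gamma>"
    using eventually_compose_filterlim[OF errors ns] eventually_compose_filterlim[OF eventually_ge_at_top ns]
    by eventually_elim (use g snr_nonneg in fastforce)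
  then have "\<exists>\<^sub>F i in sequentially. alpha_err w \<sigma> (ns i) 0 + beta_err w \<sigma> (ns i) (g i) 0 \<le> 1 - \<gamma>"
    by (rule frequently_rev_mp[OF large])
  then have "liminf (\<lambda>i. ereal (alpha_err w \<sigma> (ns i) 0 + beta_err w \<sigma> (ns i) (g i) 0)) < 1"
    by (rule liminf_ereal_less_1) (use \<open>0 < \<gamma>\<close> in linarith)
  moreover have "1 \<le> liminf (\<lambda>i. ereal (alpha_err w \<sigma> (ns i) ((\<lambda>_. 0) i) + beta_err w \<sigma> (ns i) (g i) ((\<lambda>_. 0) i)))"
    using inconsistent unfolding inconsistent_def by (rule spec)
  ultimately show False
    by simp
qed

lemma inconsistent_iff_snr_tendsto_0:
  assumes "filterlim ns sequentially sequentially" "\<And>i. l2 (g i)"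
  shows "inconsistent w \<sigma> ns g \<longleftrightarrow> (\<lambda>i. snr w \<sigma> (ns i) (g i)) \<longlonglongrightarrow> 0"
  using assms inconsistent_if_snr_tendsto_0 snr_tendsto_0_if_inconsistent by blast

text \<open>For a nominal level \<open>a\<close> the threshold \<open>z = t / \<tau>\<^sub>n\<close> stays where \<open>\<Phi>\<close> is bounded away
  from \<open>0\<close> and \<open>1\<close>, so shifting the statistic by \<open>\<epsilon>/2\<close> changes \<open>\<Phi>\<close> by a fixed amount.\<close>

lemma beta_err_le_if_snr_large:
  assumes "0 < a" "a < 1" "0 < \<epsilon>"
  obtains \<zeta> \<Gamma> where "0 < \<zeta>" "0 < \<Gamma>"
    "\<forall>\<^sub>F n in sequentially. \<forall>\<theta> t. l2 \<theta> \<longrightarrow> \<epsilon> \<le> snr w \<sigma> n \<theta> \<longrightarrow> \<bar>alpha_err w \<sigma> n t - a\<bar> < \<zeta> \<longrightarrow>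
       beta_err w \<sigma> n \<theta> t \<le> 1 - a - \<Gamma>"
proof -
  obtain \<Gamma> where "0 < \<Gamma>"
    and gap: "\<And>z. (1 - a) / 2 \<le> \<Phi> z \<Longrightarrow> \<Phi> z \<le> 1 - a / 2 \<Longrightarrow> \<Gamma> \<le> \<Phi> z - \<Phi> (z - \<epsilon> / 2)"
    using Phi_increment_lower_bound[of "(1 - a) / 2" "1 - a / 2" "\<epsilon> / 2"] assms by auto
  define \<zeta> where "\<zeta> = min (min (a / 4) ((1 - a) / 4)) (\<Gamma> / 8)"
  from \<open>0 < \<Gamma>\<close> have \<zeta>: "0 < \<zeta>" "4 * \<zeta> \<le> a" "4 * \<zeta> \<le> 1 - a" "8 * \<zeta> \<le> \<Gamma>"
    using assms by (auto simp: \<zeta>_def min_def)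
  have "(\<lambda>n. 16 * max_weight_ratio (w n) / \<epsilon>) \<longlonglongrightarrow> 16 * 0 / \<epsilon>"
    by (intro tendsto_intros max_weight_ratio_tendsto_0) (use assms in simp)
  then have "\<forall>\<^sub>F n in sequentially. 16 * max_weight_ratio (w n) / \<epsilon> < \<Gamma> / 4"
    by (rule order_tendstoD(2)) (use \<open>0 < \<Gamma>\<close> in simp)
  moreover have "\<forall>\<^sub>F n in sequentially. \<forall>z. \<bar>null_cdf (w n) z - \<Phi> z\<bar> \<le> \<zeta>"
    by (rule null_cdf_uniformly_tendsto_Phi[OF \<zeta>(1)])
  ultimately have "\<forall>\<^sub>F n in sequentially. \<forall>\<theta> t. l2 \<theta> \<longrightarrow> \<epsilon> \<le> snr w \<sigma> n \<theta> \<longrightarrow>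
      \<bar>alpha_err w \<sigma> n t - a\<bar> < \<zeta> \<longrightarrow> beta_err w \<sigma> n \<theta> t \<le> 1 - a - \<Gamma> / 4"
    using eventually_ge_at_top[of 1]
  proof eventually_elim
    case (elim n)
    show ?case
    proof (intro allI impI)
      fix \<theta> t
      assume "l2 \<theta>" and large: "\<epsilon> \<le> snr w \<sigma> n \<theta>" and alpha: "\<bar>alpha_err w \<sigma> n t - a\<bar> < \<zeta>"
      let ?z = "t / null_sd w \<sigma> n" and ?D = "snr w \<sigma> n \<theta>"
      have "\<bar>null_cdf (w n) ?z - \<Phi> ?z\<bar> \<le> \<zeta>" "\<bar>null_cdf (w n) (?z - \<epsilon> / 2) - \<Phi> (?z - \<epsilon> / 2)\<bar> \<le> \<zeta>"
        using elim(2) by blast+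
      note close = this[unfolded abs_le_iff]
      have alpha_z: "alpha_err w \<sigma> n t = 1 - null_cdf (w n) ?z"
        by (rule alpha_err_eq[OF elim(3)])
      then have "\<Gamma> \<le> \<Phi> ?z - \<Phi> (?z - \<epsilon> / 2)"
        using alpha close \<zeta> by (intro gap) (auto simp: abs_less_iff)
      have "beta_err w \<sigma> n \<theta> t \<le> null_cdf (w n) (?z - ?D / 2) + 16 * max_weight_ratio (w n) / ?D"
        using large assms(3) by (intro beta_err_le[OF elim(3) \<open>l2 \<theta>\<close>]) simp
      also have "\<dots> \<le> null_cdf (w n) (?z - \<epsilon> / 2) + 16 * max_weight_ratio (w n) / \<epsilon>"
        using large assms(3) max_weight_ratio_nonneg[OF elim(3)]
        by (intro add_mono null_cdf_mono divide_left_mono) simp_all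
      finally show "beta_err w \<sigma> n \<theta> t \<le> 1 - a - \<Gamma> / 4"
        using elim(1) alpha alpha_z close \<open>\<Gamma> \<le> _\<close> \<zeta> by (simp add: abs_less_iff)
    qed
  qed
  moreover have "0 < \<Gamma> / 4"
    using \<open>0 < \<Gamma>\<close> by simp
  ultimately show ?thesis
    using that \<zeta>(1) by blast
qed

lemma consistent_if_snr_bounded_below:
  assumes ns: "filterlim ns sequentially sequentially" and f: "\<And>i. l2 (f i)"
    and "0 < \<epsilon>" and large: "\<forall>\<^sub>F i in sequentially. \<epsilon> \<le> snr w \<sigma> (ns i) (f i)"
  shows "consistent w \<sigma> ns f"
  unfolding consistent_def
proof (intro allI impI)
  fix a :: real and t :: "nat \<Rightarrow> real"
  assume a: "0 < a \<and> a < 1" and size: "(\<lambda>i. alpha_err w \<sigma> (ns i) (t i) / a) \<longlonglongrightarrow> 1"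
  obtain \<zeta> \<Gamma> where "0 < \<zeta>" "0 < \<Gamma>" and power: "\<forall>\<^sub>F n in sequentially. \<forall>\<theta> t. l2 \<theta> \<longrightarrow>
      \<epsilon> \<le> snr w \<sigma> n \<theta> \<longrightarrow> \<bar>alpha_err w \<sigma> n t - a\<bar> < \<zeta> \<longrightarrow> beta_err w \<sigma> n \<theta> t \<le> 1 - a - \<Gamma>"
    using beta_err_le_if_snr_large[of a \<epsilon>] a \<open>0 < \<epsilon>\<close> by blast
  have "(\<lambda>i. alpha_err w \<sigma> (ns i) (t i) / a * a) \<longlonglongrightarrow> 1 * a"
    by (intro tendsto_intros size)
  then have "(\<lambda>i. alpha_err w \<sigma> (ns i) (t i)) \<longlonglongrightarrow> a"
    using a by simp
  then have "\<forall>\<^sub>F i in sequentially. \<bar>alpha_err w \<sigma> (ns i) (t i) - a\<bar> < \<zeta>"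
    using \<open>0 < \<zeta>\<close> by (auto simp: tendsto_iff dist_real_def)
  with eventually_compose_filterlim[OF power ns] large
  have "\<forall>\<^sub>F i in sequentially. beta_err w \<sigma> (ns i) (f i) (t i) \<le> 1 - a - \<Gamma>"
    by eventually_elim (use f in blast)
  then have "limsup (\<lambda>i. ereal (beta_err w \<sigma> (ns i) (f i) (t i))) \<le> ereal (1 - a - \<Gamma>)"
    by (intro Limsup_bounded) simp
  also have "\<dots> < ereal (1 - a)"
    using \<open>0 < \<Gamma>\<close> by simp
  finally show "limsup (\<lambda>i. ereal (beta_err w \<sigma> (ns i) (f i) (t i))) < ereal (1 - a)" .
qed

end

section \<open>The assumptions on the weights\<close>

lemma kn_half_mass:
  assumes "\<And>j. 0 \<le> w n j" "summable (w n)" "0 < rho w n"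
  shows "1 \<le> kn w n" "rho w n / 2 < (\<Sum>j<kn w n. w n j)"
proof -
  let ?S = "{k::nat. 1 \<le> k \<and> (\<Sum>m\<in>{1..<k}. w n (m - 1)) \<le> rho w n / 2}"
  have shift: "(\<Sum>m\<in>{1..<k}. w n (m - 1)) = (\<Sum>j<k - 1. w n j)" for k
  proof (cases k)
    case (Suc k')
    then show ?thesis
      using sum.shift_bounds_nat_ivl[of "\<lambda>m. w n (m - 1)" 0 1 k'] by (simp add: atLeast0LessThan)
  qed simp
  have "(\<lambda>K. \<Sum>j<K. w n j) \<longlonglongrightarrow> rho w n"
    unfolding rho_def by (rule summable_LIMSEQ[OF assms(2)])
  then have "\<forall>\<^sub>F K in sequentially. rho w n / 2 < (\<Sum>j<K. w n j)"
    by (rule order_tendstoD(1)) (use assms(3) in simp)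
  then obtain K where K: "rho w n / 2 < (\<Sum>j<K. w n j)"
    by (auto simp: eventually_sequentially)
  have "k \<le> K" if "k \<in> ?S" for k
  proof (rule ccontr)
    assume "\<not> k \<le> K"
    then have "(\<Sum>j<K. w n j) \<le> (\<Sum>j<k - 1. w n j)"
      using assms(1) by (intro sum_mono2) auto
    then show False
      using that K shift[of k] by simp
  qed
  then have fin: "finite ?S"
    by (meson finite_atMost finite_subset subsetI atMost_iff)
  have "1 \<in> ?S"
    using assms(3) by simp
  then have kn: "kn w n = Max ?S"
    unfolding kn_def using fin by (intro cSup_eq_Max) auto
  then show "1 \<le> kn w n"
    using Max_ge[OF fin \<open>1 \<in> ?S\<close>] by simp
  have "Suc (kn w n) \<notin> ?S"
    using Max_ge[OF fin, of "Suc (kn w n)"] kn by auto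
  then show "rho w n / 2 < (\<Sum>j<kn w n. w n j)"
    using shift[of "Suc (kn w n)"] by simp
qed

lemma half_mass_index_bounds:
  fixes v :: "nat \<Rightarrow> real"
  assumes "\<And>j. 0 \<le> v j" "summable v" "decseq v" and half: "(\<Sum>j. v j) / 2 < (\<Sum>j<k. v j)"
  shows "(\<Sum>j. v j) / 2 < real k * v 0" "real k * (v (k - 1))\<^sup>2 \<le> (\<Sum>j. (v j)\<^sup>2)"
    "0 < v 0" "0 < (\<Sum>j. v j)"
proof -
  have le_first: "v j \<le> v 0" for j
    using \<open>decseq v\<close> by (simp add: decseq_def)
  have "(\<Sum>j<k. v j) \<le> real k * v 0"
    using sum_mono[of "{..<k}" v "\<lambda>_. v 0"] le_first by simp
  with half show mass: "(\<Sum>j. v j) / 2 < real k * v 0"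
    by linarith
  have "(\<Sum>j<k. v j) \<le> (\<Sum>j. v j)"
    using assms(1,2) by (intro sum_le_suminf) auto
  with half show "0 < (\<Sum>j. v j)"
    by linarith
  with mass have "0 < real k * v 0"
    by linarith
  then show "0 < v 0"
    by (simp add: zero_less_mult_iff)
  have "real k * (v (k - 1))\<^sup>2 = (\<Sum>j<k. (v (k - 1))\<^sup>2)"
    by simp
  also have "\<dots> \<le> (\<Sum>j<k. (v j)\<^sup>2)"
    using \<open>decseq v\<close> assms(1) by (intro sum_mono power_mono) (auto simp: decseq_def)
  also have "\<dots> \<le> (\<Sum>j. (v j)\<^sup>2)"
    using summable_sq_if_bounded[OF assms(1) le_first assms(2)] by (intro sum_le_suminf) auto
  finally show "real k * (v (k - 1))\<^sup>2 \<le> (\<Sum>j. (v j)\<^sup>2)" .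
qed

text \<open>\<open>k\<close> plays the role of the half-mass index \<open>k\<^sub>n\<close>: the first \<open>k\<close> weights carry half of
  the mass, and each of them is at least \<open>v (k - 1) \<ge> v 0 / C\<close>.\<close>

lemma max_weight_ratio_le:
  fixes v :: "nat \<Rightarrow> real"
  assumes "\<And>j. 0 \<le> v j" "summable v" "decseq v"
    and half: "(\<Sum>j. v j) / 2 < (\<Sum>j<k. v j)" and comparable: "v 0 \<le> C * v (k - 1)"
  shows "max_weight_ratio v \<le> C\<^sup>2 * chi2_sd v / (\<Sum>j. v j)"
proof -
  note bounds = half_mass_index_bounds[OF assms(1-3) half]
  have "(\<Sum>j. v j) * v 0 / 2 < real k * (v 0)\<^sup>2"
    using mult_strict_right_mono[OF bounds(1,3)] by (simp add: power2_eq_square)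
  also have "\<dots> \<le> real k * (C * v (k - 1))\<^sup>2"
    using comparable bounds(3) by (intro mult_left_mono power_mono) simp_all
  also have "\<dots> = C\<^sup>2 * (real k * (v (k - 1))\<^sup>2)"
    by (simp add: power_mult_distrib)
  also have "\<dots> \<le> C\<^sup>2 * (\<Sum>j. (v j)\<^sup>2)"
    using bounds(2) by (rule mult_left_mono) simp
  finally have "v 0 * (\<Sum>j. v j) < 2 * C\<^sup>2 * (\<Sum>j. (v j)\<^sup>2)"
    by (simp add: field_simps)
  moreover have "0 < (\<Sum>j. (v j)\<^sup>2)"
  proof -
    have "0 < 2 * C\<^sup>2 * (\<Sum>j. (v j)\<^sup>2)"
      using mult_pos_pos[OF bounds(3,4)] \<open>v 0 * (\<Sum>j. v j) < _\<close> by linarith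
    then show ?thesis
      by (simp add: zero_less_mult_iff)
  qed
  ultimately show ?thesis
    using bounds(4) by (simp add: max_weight_ratio_def chi2_sd_def field_simps power2_eq_square)
qed

lemma max_weight_ratio_le_powr:
  assumes "0 < \<sigma>" "1 \<le> n" "\<And>j. 0 \<le> w n j" "summable (w n)" "decseq (w n)"
    and sq: "real n ^ 2 / \<sigma> ^ 4 * (\<Sum>j. (w n j)\<^sup>2) < C2"
    and rho: "0 < c1" "c1 * real n powr (- 2 * r) \<le> rho w n"
    and first: "w n 0 \<le> C * kap w n"
  shows "max_weight_ratio (w n) \<le> C\<^sup>2 * sqrt (2 * C2) * \<sigma>\<^sup>2 / c1 * real n powr (2 * r - 1)"
proof -
  have "0 < c1 * real n powr (- 2 * r)"
    using rho(1) assms(2) by simp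
  then have rho_pos: "0 < rho w n"
    using rho(2) by linarith
  have "summable (\<lambda>j. (w n j)\<^sup>2)"
    using assms(3-5) by (intro summable_sq_if_bounded[where umax="w n 0"]) (simp_all add: decseq_def)
  then have "0 \<le> real n ^ 2 / \<sigma> ^ 4 * (\<Sum>j. (w n j)\<^sup>2)"
    by (simp add: suminf_nonneg)
  with sq have "0 \<le> C2"
    by linarith
  note k = kn_half_mass[OF assms(3,4) rho_pos]
  have "max_weight_ratio (w n) \<le> C\<^sup>2 * chi2_sd (w n) / (\<Sum>j. w n j)"
    by (rule max_weight_ratio_le[where k="kn w n"])
      (use k first assms(3-5) in \<open>simp_all add: rho_def kap_def\<close>)
  then have "max_weight_ratio (w n) \<le> C\<^sup>2 * chi2_sd (w n) / rho w n"
    by (simp add: rho_def)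
  also have "\<dots> \<le> C\<^sup>2 * (sqrt (2 * C2) * \<sigma>\<^sup>2 / real n) / (c1 * real n powr (- 2 * r))"
  proof (intro frac_le mult_left_mono rho(2))
    have "(\<Sum>j. (w n j)\<^sup>2) \<le> C2 * \<sigma> ^ 4 / (real n)\<^sup>2"
      using sq assms(1,2) by (simp add: field_simps)
    then have "chi2_sd (w n) \<le> sqrt (2 * (C2 * \<sigma> ^ 4 / (real n)\<^sup>2))"
      unfolding chi2_sd_def by simp
    also have "\<dots> = sqrt (2 * C2) * \<sigma>\<^sup>2 / real n"
    proof -
      have "sqrt (\<sigma> ^ 4) = \<sigma>\<^sup>2"
        using real_sqrt_abs[of "\<sigma>\<^sup>2"] by (simp add: power_mult[symmetric])
      then show ?thesis
        by (simp add: real_sqrt_mult real_sqrt_divide)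
    qed
    finally show "chi2_sd (w n) \<le> sqrt (2 * C2) * \<sigma>\<^sup>2 / real n" .
    show "0 \<le> C\<^sup>2 * (sqrt (2 * C2) * \<sigma>\<^sup>2 / real n)"
      using \<open>0 \<le> C2\<close> by simp
  qed (use rho assms(2) in simp_all)
  also have "\<dots> = C\<^sup>2 * sqrt (2 * C2) * \<sigma>\<^sup>2 / c1 * real n powr (2 * r - 1)"
    using assms(2) by (simp add: powr_diff powr_minus field_simps)
  finally show ?thesis .
qed

lemma asymptotic_weighted_chi2_test_if_weight_bounds:
  assumes "0 < \<sigma>" "r < 1 / 2"
    and nonneg: "\<And>n j. 1 \<le> n \<Longrightarrow> 0 \<le> w n j" and summable: "\<And>n. 1 \<le> n \<Longrightarrow> summable (w n)"
    and decreasing: "\<And>n. 1 \<le> n \<Longrightarrow> decseq (w n)"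
    and sq: "\<And>n. 1 \<le> n \<Longrightarrow> C1 < real n ^ 2 / \<sigma> ^ 4 * (\<Sum>j. (w n j)\<^sup>2)
                                \<and> real n ^ 2 / \<sigma> ^ 4 * (\<Sum>j. (w n j)\<^sup>2) < C2"
    and "0 < C1"
    and rho: "0 < c1" "\<And>n. 1 \<le> n \<Longrightarrow> c1 * real n powr (- 2 * r) \<le> rho w n"
    and first: "\<And>n. 1 \<le> n \<Longrightarrow> w n 0 \<le> C * kap w n"
  shows "asymptotic_weighted_chi2_test w \<sigma>"
proof -
  interpret weighted_chi2_test w \<sigma>
  proof
    fix n j :: nat
    assume "1 \<le> n"
    show "w n j \<le> w n 0"
      using decreasing[OF \<open>1 \<le> n\<close>] by (simp add: decseq_def)
    have "0 < real n ^ 2 / \<sigma> ^ 4 * (\<Sum>j. (w n j)\<^sup>2)"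
      using sq[OF \<open>1 \<le> n\<close>] \<open>0 < C1\<close> by linarith
    then show "0 < (\<Sum>j. (w n j)\<^sup>2)"
      using \<open>0 < \<sigma>\<close> \<open>1 \<le> n\<close> by (simp add: zero_less_mult_iff zero_less_divide_iff)
  qed (use assms in auto)
  define K where "K = C\<^sup>2 * sqrt (2 * C2) * \<sigma>\<^sup>2 / c1"
  have "(\<lambda>n. K * real n powr (2 * r - 1)) \<longlonglongrightarrow> K * 0"
    using \<open>r < 1 / 2\<close> by (intro tendsto_intros tendsto_neg_powr filterlim_real_sequentially) simp
  then have bound: "(\<lambda>n. K * real n powr (2 * r - 1)) \<longlonglongrightarrow> 0"
    by simp
  have "\<forall>\<^sub>F n in sequentially. 0 \<le> max_weight_ratio (w n)"
    using eventually_ge_at_top[of 1] by eventually_elim (rule max_weight_ratio_nonneg)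
  moreover have "\<forall>\<^sub>F n in sequentially. max_weight_ratio (w n) \<le> K * real n powr (2 * r - 1)"
    using eventually_ge_at_top[of 1]
  proof eventually_elim
    case (elim n)
    show ?case
      unfolding K_def using elim assms sq[OF elim]
      by (intro max_weight_ratio_le_powr) auto
  qed
  ultimately have "(\<lambda>n. max_weight_ratio (w n)) \<longlonglongrightarrow> 0"
    using bound by (rule tendsto_sandwich[OF _ _ tendsto_const])
  then show ?thesis
    by unfold_locales
qed

section \<open>Geometry of square-summable sequences\<close>

lemma summable_mult_l2:
  assumes "l2 a" "l2 b"
  shows "summable (\<lambda>j. a j * b j)"
proof (rule summable_comparison_test)
  show "summable (\<lambda>j. (a j)\<^sup>2 + (b j)\<^sup>2)"
    using assms unfolding l2_def by (rule summable_add)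
  have "2 * \<bar>a j * b j\<bar> \<le> (a j)\<^sup>2 + (b j)\<^sup>2" for j
    using sum_squares_bound[of "\<bar>a j\<bar>" "\<bar>b j\<bar>"] by (simp add: abs_mult)
  then show "\<exists>N. \<forall>j\<ge>N. norm (a j * b j) \<le> (a j)\<^sup>2 + (b j)\<^sup>2"
    by (smt (verit) real_norm_def)
qed

lemma l2_cmult: "l2 a \<Longrightarrow> l2 (\<lambda>j. c * a j)"
  unfolding l2_def by (simp add: power_mult_distrib summable_mult)

lemma l2_add: "l2 a \<Longrightarrow> l2 b \<Longrightarrow> l2 (\<lambda>j. a j + b j)"
  using summable_mult_l2[of a b] unfolding l2_def
  by (simp add: power2_sum summable_add summable_mult mult.assoc)

lemma l2_minus: "l2 a \<Longrightarrow> l2 (\<lambda>j. - a j)"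
  using l2_cmult[of a "- 1"] by simp

lemma l2_diff: "l2 a \<Longrightarrow> l2 b \<Longrightarrow> l2 (\<lambda>j. a j - b j)"
  using l2_add[of a "\<lambda>j. -1 * b j"] l2_cmult[of b "-1"] by simp

lemma power2_nrm: "l2 a \<Longrightarrow> (nrm a)\<^sup>2 = (\<Sum>j. (a j)\<^sup>2)"
  unfolding nrm_def l2_def by (simp add: suminf_nonneg)

lemma nrm_nonneg: "l2 a \<Longrightarrow> 0 \<le> nrm a"
  unfolding nrm_def l2_def by (simp add: suminf_nonneg)

lemma nrm_minus: "nrm (\<lambda>j. - a j) = nrm a"
  by (simp add: nrm_def)

lemma nrm_cmult:
  assumes "l2 a"
  shows "nrm (\<lambda>j. c * a j) = \<bar>c\<bar> * nrm a"
proof -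
  have "(\<Sum>j. (c * a j)\<^sup>2) = c\<^sup>2 * (\<Sum>j. (a j)\<^sup>2)"
    using suminf_mult[OF assms[unfolded l2_def], of "c\<^sup>2"] by (simp add: power_mult_distrib)
  then show ?thesis
    by (simp add: nrm_def real_sqrt_mult)
qed

lemma inr_commute: "inr a b = inr b a"
  by (simp add: inr_def mult.commute)

lemma inr_self: "inr a a = (nrm a)\<^sup>2" if "l2 a"
  using power2_nrm[OF that] by (simp add: inr_def power2_eq_square)

lemma inr_cmult_left: "l2 a \<Longrightarrow> l2 b \<Longrightarrow> inr (\<lambda>j. c * a j) b = c * inr a b"
  using summable_mult_l2 by (simp add: inr_def mult.assoc suminf_mult)

lemma inr_minus_left: "l2 a \<Longrightarrow> l2 b \<Longrightarrow> inr (\<lambda>j. - a j) b = - inr a b"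
  using inr_cmult_left[of a b "- 1"] by simp

lemma inr_add_left: "l2 a \<Longrightarrow> l2 b \<Longrightarrow> l2 c \<Longrightarrow> inr (\<lambda>j. a j + b j) c = inr a c + inr b c"
  using summable_mult_l2[of a c] summable_mult_l2[of b c]
  by (simp add: inr_def distrib_right suminf_add)

lemma inr_diff_right: "l2 a \<Longrightarrow> l2 b \<Longrightarrow> l2 d \<Longrightarrow> inr a (\<lambda>j. b j - d j) = inr a b - inr a d"
  using summable_mult_l2[of a b] summable_mult_l2[of a d]
  by (simp add: inr_def right_diff_distrib suminf_diff)

lemma power2_nrm_add:
  assumes "l2 a" "l2 b"
  shows "(nrm (\<lambda>j. a j + b j))\<^sup>2 = (nrm a)\<^sup>2 + (nrm b)\<^sup>2 + 2 * inr a b"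
proof -
  have sa: "summable (\<lambda>j. (a j)\<^sup>2)" and sb: "summable (\<lambda>j. (b j)\<^sup>2)"
    using assms unfolding l2_def by auto
  note sab = summable_mult[OF summable_mult_l2[OF assms], of 2]
  have "(nrm (\<lambda>j. a j + b j))\<^sup>2 = (\<Sum>j. ((a j)\<^sup>2 + (b j)\<^sup>2) + 2 * (a j * b j))"
    unfolding power2_nrm[OF l2_add[OF assms]] by (simp add: power2_sum mult.assoc)
  also have "\<dots> = (\<Sum>j. (a j)\<^sup>2) + (\<Sum>j. (b j)\<^sup>2) + 2 * (\<Sum>j. a j * b j)"
    using suminf_add[OF summable_add[OF sa sb] sab] suminf_add[OF sa sb]
      suminf_mult[OF summable_mult_l2[OF assms], of 2]
    by simp
  finally show ?thesis
    using power2_nrm assms by (simp add: inr_def)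
qed

lemma orthogonal_projection_line:
  assumes "l2 F" "l2 g" "0 < nrm g"
  defines "p \<equiv> \<lambda>j. inr F g / (nrm g)\<^sup>2 * g j"
  shows "l2 p" "l2 (\<lambda>j. F j - p j)" "inr p (\<lambda>j. F j - p j) = 0"
    "nrm p = \<bar>inr F g\<bar> / nrm g" "nrm p \<le> nrm F"
proof -
  let ?c = "inr F g / (nrm g)\<^sup>2"
  have p_left: "inr p x = ?c * inr g x" if "l2 x" for x
    unfolding p_def using assms(2) that by (rule inr_cmult_left)
  show "l2 p"
    unfolding p_def by (rule l2_cmult[OF assms(2)])
  then show rest: "l2 (\<lambda>j. F j - p j)"
    by (rule l2_diff[OF assms(1)])
  have "inr g (\<lambda>j. F j - p j) = inr g F - inr g p"
    using assms(2,1) \<open>l2 p\<close> by (rule inr_diff_right)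
  also have "inr g p = ?c * inr g g"
    using p_left[OF assms(2)] inr_commute[of g p] by simp
  also have "inr g F = ?c * inr g g"
    using assms(3) inr_commute[of g F] by (simp add: inr_self[OF assms(2)])
  finally show orth: "inr p (\<lambda>j. F j - p j) = 0"
    using p_left[OF rest] by simp
  show "nrm p = \<bar>inr F g\<bar> / nrm g"
  proof -
    have "nrm p = \<bar>?c\<bar> * nrm g"
      unfolding p_def by (rule nrm_cmult[OF assms(2)])
    also have "\<dots> = \<bar>inr F g\<bar> / (nrm g)\<^sup>2 * nrm g"
      by (simp add: abs_divide)
    also have "\<dots> = \<bar>inr F g\<bar> / nrm g"
      using assms(3) by (simp add: power2_eq_square)
    finally show ?thesis .
  qed
  have "(\<lambda>j. (F j - p j) + p j) = F"
    by simp
  then have "(nrm F)\<^sup>2 = (nrm (\<lambda>j. F j - p j))\<^sup>2 + (nrm p)\<^sup>2"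
    using power2_nrm_add[OF rest \<open>l2 p\<close>] orth inr_commute[of p] by simp
  then have "(nrm p)\<^sup>2 \<le> (nrm F)\<^sup>2"
    by simp
  then show "nrm p \<le> nrm F"
    using nrm_nonneg[OF assms(1)] by (rule power2_le_imp_le)
qed

section \<open>Pure consistency\<close>

definition pythagorean_wrt_inconsistent ::
  "(nat \<Rightarrow> nat \<Rightarrow> real) \<Rightarrow> real \<Rightarrow> real \<Rightarrow> (nat \<Rightarrow> nat \<Rightarrow> real) \<Rightarrow> bool" where
  "pythagorean_wrt_inconsistent w \<sigma> r f \<longleftrightarrow>
     (\<forall>ns f1. subseq_idx ns \<and> (\<forall>i. l2 (f1 i)) \<and> r_inconsistent w \<sigma> r ns f1 \<longrightarrow>
        (\<lambda>i. ((nrm (\<lambda>j. f (ns i) j + f1 i j))\<^sup>2 - (nrm (f (ns i)))\<^sup>2 - (nrm (f1 i))\<^sup>2)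
              / real (ns i) powr (-2*r)) \<longlonglongrightarrow> 0)"

lemma pythagorean_wrt_inconsistent_iff_inr:
  assumes "\<And>n. l2 (f n)"
  shows "pythagorean_wrt_inconsistent w \<sigma> r f \<longleftrightarrow>
    (\<forall>ns g. subseq_idx ns \<and> (\<forall>i. l2 (g i)) \<and> r_inconsistent w \<sigma> r ns g \<longrightarrow>
       (\<lambda>i. inr (f (ns i)) (g i) / real (ns i) powr (-2*r)) \<longlonglongrightarrow> 0)"
proof -
  have "(\<lambda>i. ((nrm (\<lambda>j. f (ns i) j + g i j))\<^sup>2 - (nrm (f (ns i)))\<^sup>2 - (nrm (g i))\<^sup>2)
      / real (ns i) powr (-2*r)) \<longlonglongrightarrow> 0 \<longleftrightarrow> (\<lambda>i. inr (f (ns i)) (g i) / real (ns i) powr (-2*r)) \<longlonglongrightarrow> 0"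
    if "\<forall>i. l2 (g i)" for ns g
  proof -
    let ?q = "\<lambda>i. inr (f (ns i)) (g i) / real (ns i) powr (-2*r)"
    have "(nrm (\<lambda>j. f (ns i) j + g i j))\<^sup>2 - (nrm (f (ns i)))\<^sup>2 - (nrm (g i))\<^sup>2
        = 2 * inr (f (ns i)) (g i)" for i
      using power2_nrm_add[OF assms that[rule_format]] by simp
    then have eq: "((nrm (\<lambda>j. f (ns i) j + g i j))\<^sup>2 - (nrm (f (ns i)))\<^sup>2 - (nrm (g i))\<^sup>2)
        / real (ns i) powr (-2*r) = 2 * ?q i" for i
      by (simp only: times_divide_eq_right)
    have "(\<lambda>i. 2 * ?q i) \<longlonglongrightarrow> 0 \<longleftrightarrow> ?q \<longlonglongrightarrow> 0"
      using tendsto_mult_right_zero[of "\<lambda>i. 2 * ?q i" sequentially "1 / 2"]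
        tendsto_mult_right_zero[of ?q sequentially 2]
      by auto
    then show ?thesis
      unfolding eq .
  qed
  then show ?thesis
    unfolding pythagorean_wrt_inconsistent_def by auto
qed

lemma frequently_sequentially_subseq:
  assumes "\<exists>\<^sub>F n in sequentially. P n"
  obtains \<phi> :: "nat \<Rightarrow> nat" where "strict_mono \<phi>" "\<And>k. P (\<phi> k)"
  using infinite_enumerate[of "{n. P n}"] assms
  by (auto simp: frequently_cofinite[symmetric] cofinite_eq_sequentially)

lemma subseq_idx_tendsto_0:
  fixes X :: "nat \<Rightarrow> real"
  assumes "\<And>\<epsilon>. 0 < \<epsilon> \<Longrightarrow> \<exists>\<^sub>F n in sequentially. \<bar>X n\<bar> < \<epsilon>"
  obtains ns where "subseq_idx ns" "(\<lambda>k. X (ns k)) \<longlonglongrightarrow> 0"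
proof -
  have small: "\<exists>n>N. \<bar>X n\<bar> < 1 / real (Suc k)" for N k
  proof -
    obtain n where "Suc N \<le> n" "\<bar>X n\<bar> < 1 / real (Suc k)"
      using assms[of "1 / real (Suc k)"] by (auto simp: frequently_sequentially)
    then show ?thesis
      by (auto simp: Suc_le_eq)
  qed
  have "\<exists>ns. \<forall>k. (1 \<le> ns k \<and> \<bar>X (ns k)\<bar> < 1 / real (Suc k)) \<and> ns k < ns (Suc k)"
  proof (rule dependent_nat_choice)
    show "\<exists>n. 1 \<le> n \<and> \<bar>X n\<bar> < 1 / real (Suc 0)"
      using small[of 0 0] by (force simp: Suc_le_eq)
    show "\<exists>m. (1 \<le> m \<and> \<bar>X m\<bar> < 1 / real (Suc (Suc k))) \<and> n < m" for n k
    proof -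
      obtain m where "n < m" "\<bar>X m\<bar> < 1 / real (Suc (Suc k))"
        using small[of n "Suc k"] by blast
      then show ?thesis
        by (intro exI[of _ m]) simp
    qed
  qed
  then obtain ns where ns: "\<And>k. 1 \<le> ns k" "\<And>k. \<bar>X (ns k)\<bar> < 1 / real (Suc k)" "\<And>k. ns k < ns (Suc k)"
    by blast
  show ?thesis
  proof
    show "subseq_idx ns"
      unfolding subseq_idx_def using ns(1,3) by (simp add: strict_mono_Suc_iff)
    have "\<forall>\<^sub>F k in sequentially. \<bar>X (ns k)\<bar> \<le> inverse (real (Suc k))"
      using ns(2) by (simp add: divide_inverse less_imp_le)
    then have "(\<lambda>k. \<bar>X (ns k)\<bar>) \<longlonglongrightarrow> 0"
      by (intro tendsto_sandwich[OF _ _ tendsto_const LIMSEQ_inverse_real_of_nat]) simp_all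
    then show "(\<lambda>k. X (ns k)) \<longlonglongrightarrow> 0"
      by (simp add: tendsto_rabs_zero_iff)
  qed
qed

lemma rate_bounded_subseq: "rate_bounded r ns g \<Longrightarrow> rate_bounded r (\<lambda>k. ns (\<phi> k)) (\<lambda>k. g (\<phi> k))"
  unfolding rate_bounded_def by blast

lemma subseq_idx_comp: "subseq_idx ns \<Longrightarrow> strict_mono \<phi> \<Longrightarrow> subseq_idx (\<lambda>k. ns (\<phi> k))"
  using strict_mono_o[of ns \<phi>] subseq_idx_ge_1[of ns "\<phi> 0"] by (simp add: subseq_idx_def comp_def)

lemma inr_ratio_not_tendsto_0:
  assumes "\<And>i. 1 \<le> ns i" "0 < c" "\<And>i. c * real (ns i) powr (-r) < nrm (g i)"
    and "\<And>i. inr (F i) (g i) = - (nrm (g i))\<^sup>2"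
  shows "\<not> (\<lambda>i. inr (F i) (g i) / real (ns i) powr (-2*r)) \<longlonglongrightarrow> 0"
proof
  assume "(\<lambda>i. inr (F i) (g i) / real (ns i) powr (-2*r)) \<longlonglongrightarrow> 0"
  then have "\<forall>\<^sub>F i in sequentially. - c\<^sup>2 < inr (F i) (g i) / real (ns i) powr (-2*r)"
    by (rule order_tendstoD(1)) (use assms(2) in simp)
  then obtain i where i: "- c\<^sup>2 < inr (F i) (g i) / real (ns i) powr (-2*r)"
    using eventually_happens'[OF sequentially_bot] by blast
  define p where "p = real (ns i) powr (-2*r)"
  have "0 < p"
    using assms(1)[of i] by (simp add: p_def)
  have "(c * real (ns i) powr (-r))\<^sup>2 < (nrm (g i))\<^sup>2"
    using assms(1,3)[of i] assms(2) by (intro power_strict_mono) simp_all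
  also have "(c * real (ns i) powr (-r))\<^sup>2 = c\<^sup>2 * p"
    using assms(1)[of i] by (simp add: p_def power_mult_distrib powr_power)
  finally have "c\<^sup>2 < (nrm (g i))\<^sup>2 / p"
    using \<open>0 < p\<close> by (simp add: less_divide_eq)
  then show False
    using i assms(4)[of i] by (simp add: p_def)

qed

lemma not_pythagorean_if_anti_aligned:
  assumes f: "\<And>n. l2 (f n)" and pyth: "pythagorean_wrt_inconsistent w \<sigma> r f"
    and ns: "subseq_idx ns" and g: "\<And>i. l2 (g i)"
    and "inconsistent w \<sigma> ns g" and "rate_bounded r ns g"
    and anti: "\<And>i. inr (f (ns i)) (g i) = - (nrm (g i))\<^sup>2"
  shows False
proof -
  obtain c where "0 < c" and lower: "\<And>i. c * real (ns i) powr (-r) < nrm (g i)"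
    using assms(6) subseq_idx_ge_1[OF ns] by (auto simp: rate_bounded_def)
  have "(\<lambda>i. inr (f (ns i)) (g i) / real (ns i) powr (-2*r)) \<longlonglongrightarrow> 0"
    using pyth[unfolded pythagorean_wrt_inconsistent_iff_inr[OF f], rule_format, of ns g] ns g assms(5,6)
    by (simp add: r_inconsistent_def)
  with inr_ratio_not_tendsto_0[OF subseq_idx_ge_1[OF ns] \<open>0 < c\<close> lower anti] show False
    by contradiction
qed

context asymptotic_weighted_chi2_test
begin

lemma inconsistent_cmult_bounded:
  assumes ns: "filterlim ns sequentially sequentially" and g: "\<And>i. l2 (g i)"
    and "inconsistent w \<sigma> ns g" and c: "\<And>i. \<bar>c i\<bar> \<le> B"
  shows "inconsistent w \<sigma> ns (\<lambda>i j. c i * g i j)"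
proof (rule inconsistent_if_snr_tendsto_0[OF ns])
  show "l2 (\<lambda>j. c i * g i j)" for i
    by (rule l2_cmult[OF g])
  have snr: "(\<lambda>i. snr w \<sigma> (ns i) (g i)) \<longlonglongrightarrow> 0"
    using snr_tendsto_0_if_inconsistent[OF ns g] assms(3) .
  have "\<forall>\<^sub>F i in sequentially. 1 \<le> ns i"
    by (rule eventually_compose_filterlim[OF eventually_ge_at_top ns])
  then have "\<forall>\<^sub>F i in sequentially. 0 \<le> snr w \<sigma> (ns i) (\<lambda>j. c i * g i j) \<and>
      snr w \<sigma> (ns i) (\<lambda>j. c i * g i j) \<le> B\<^sup>2 * snr w \<sigma> (ns i) (g i)"
  proof eventually_elim
    case (elim i)
    have "(c i)\<^sup>2 \<le> B\<^sup>2"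
      using power_mono[OF c[of i] abs_ge_zero, of 2] by simp
    moreover have "0 \<le> snr w \<sigma> (ns i) (g i)"
      by (rule snr_nonneg[OF elim g])
    ultimately show ?case
      unfolding snr_scale[OF elim g[of i], of "c i"] by (simp add: mult_right_mono)
  qed
  then have "\<forall>\<^sub>F i in sequentially. 0 \<le> snr w \<sigma> (ns i) (\<lambda>j. c i * g i j)"
    and "\<forall>\<^sub>F i in sequentially. snr w \<sigma> (ns i) (\<lambda>j. c i * g i j) \<le> B\<^sup>2 * snr w \<sigma> (ns i) (g i)"
    by (simp_all add: eventually_conj_iff)
  then show "(\<lambda>i. snr w \<sigma> (ns i) (\<lambda>j. c i * g i j)) \<longlonglongrightarrow> 0"
    using tendsto_mult_right_zero[OF snr, of "B\<^sup>2"] by (rule tendsto_sandwich[OF _ _ tendsto_const])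
qed

lemma inconsistent_subseq:
  assumes ns: "filterlim ns sequentially sequentially" and g: "\<And>i. l2 (g i)"
    and "inconsistent w \<sigma> ns g" and "strict_mono \<phi>"
  shows "inconsistent w \<sigma> (\<lambda>k. ns (\<phi> k)) (\<lambda>k. g (\<phi> k))"
proof -
  have ns': "filterlim (\<lambda>k. ns (\<phi> k)) sequentially sequentially"
    using filterlim_compose[OF ns filterlim_subseq[OF assms(4)]] .
  have "(\<lambda>i. snr w \<sigma> (ns i) (g i)) \<longlonglongrightarrow> 0"
    using snr_tendsto_0_if_inconsistent[OF ns g] assms(3) .
  from LIMSEQ_subseq_LIMSEQ[OF this assms(4)] show ?thesis
    using inconsistent_iff_snr_tendsto_0[OF ns' g] by (simp add: comp_def)
qed


lemma consistent_if_pythagorean: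
  assumes f: "\<And>n. l2 (f n)" and rate: "rate_bounded r id f"
    and pyth: "pythagorean_wrt_inconsistent w \<sigma> r f"
  shows "consistent w \<sigma> id f"
proof (rule ccontr)
  assume "\<not> consistent w \<sigma> id f"
  then have "\<exists>\<^sub>F n in sequentially. \<bar>snr w \<sigma> n (f n)\<bar> < \<epsilon>" if "0 < \<epsilon>" for \<epsilon>
  proof -
    have "\<exists>\<^sub>F n in sequentially. snr w \<sigma> n (f n) < \<epsilon>"
      using consistent_if_snr_bounded_below[of id f \<epsilon>] f that \<open>\<not> consistent w \<sigma> id f\<close>
      by (auto simp: frequently_def not_less filterlim_ident[folded id_def])
    moreover have "\<forall>\<^sub>F n in sequentially. snr w \<sigma> n (f n) < \<epsilon> \<longrightarrow> \<bar>snr w \<sigma> n (f n)\<bar> < \<epsilon>"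
      using eventually_ge_at_top[of 1]
    proof eventually_elim
      case (elim n)
      then show ?case
        using snr_nonneg[OF elim f[of n]] by simp
    qed
    ultimately show ?thesis
      by (rule frequently_rev_mp)
  qed
  then obtain ns where ns: "subseq_idx ns" and "(\<lambda>k. snr w \<sigma> (ns k) (f (ns k))) \<longlonglongrightarrow> 0"
    by (rule subseq_idx_tendsto_0)
  then have "inconsistent w \<sigma> ns (\<lambda>k. f (ns k))"
    using f by (intro inconsistent_if_snr_tendsto_0 filterlim_subseq_idx)
  then have inconsistent: "inconsistent w \<sigma> ns (\<lambda>k j. - f (ns k) j)"
    using inconsistent_cmult_bounded[OF filterlim_subseq_idx[OF ns], of "\<lambda>k. f (ns k)" "\<lambda>_. - 1" 1] f
    by simp
  moreover have "rate_bounded r ns (\<lambda>k j. - f (ns k) j)"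
    using rate subseq_idx_ge_1[OF ns] by (auto simp: rate_bounded_def nrm_minus)
  moreover have "inr (f (ns i)) (\<lambda>j. - f (ns i) j) = - (nrm (\<lambda>j. - f (ns i) j))\<^sup>2" for i
  proof -
    have "inr (f (ns i)) (\<lambda>j. - f (ns i) j) = inr (\<lambda>j. - f (ns i) j) (f (ns i))"
      by (rule inr_commute)
    also have "\<dots> = - inr (f (ns i)) (f (ns i))"
      by (rule inr_minus_left[OF f f])
    finally show ?thesis
      by (simp add: nrm_minus inr_self[OF f])
  qed
  ultimately show False
    by (rule not_pythagorean_if_anti_aligned[OF f pyth ns l2_minus[OF f]])
qed

lemma no_inconsistent_component_if_pythagorean:
  assumes f: "\<And>n. l2 (f n)" and rate: "rate_bounded r id f"
    and pyth: "pythagorean_wrt_inconsistent w \<sigma> r f"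
    and ns: "subseq_idx ns" and "0 < c1" and f1: "\<And>i. l2 (f1 i)" and f2: "\<And>i. l2 (f2 i)"
    and split: "\<And>i. f (ns i) = (\<lambda>j. f1 i j + f2 i j)" and orth: "\<And>i. inr (f2 i) (f1 i) = 0"
    and large: "\<And>i. c1 * real (ns i) powr (-r) < nrm (f2 i)"
  shows "\<not> inconsistent w \<sigma> ns f2"
proof
  assume "inconsistent w \<sigma> ns f2"
  then have inconsistent: "inconsistent w \<sigma> ns (\<lambda>i j. - f2 i j)"
    using inconsistent_cmult_bounded[OF filterlim_subseq_idx[OF ns] f2, where c="\<lambda>_. - 1" and B=1] by simp
  obtain C where bound: "\<And>i. 1 \<le> i \<Longrightarrow> nrm (f i) < C * real i powr (-r)"
    using rate by (auto simp: rate_bounded_def)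
  have orth': "inr (f1 i) (f2 i) = 0" for i
    using orth[of i] inr_commute[of "f2 i" "f1 i"] by simp
  have "(nrm (f (ns i)))\<^sup>2 = (nrm (f1 i))\<^sup>2 + (nrm (f2 i))\<^sup>2" for i
    unfolding split power2_nrm_add[OF f1 f2] orth' by simp
  then have "(nrm (f2 i))\<^sup>2 \<le> (nrm (f (ns i)))\<^sup>2" for i
    by simp
  then have "nrm (f2 i) \<le> nrm (f (ns i))" for i
    using nrm_nonneg[OF f] by (rule power2_le_imp_le)
  then have below: "nrm (f2 i) < C * real (ns i) powr (-r)" for i
    using bound[OF subseq_idx_ge_1[OF ns, of i]] by (rule le_less_trans)
  have "c1 * real (ns 0) powr (-r) < C * real (ns 0) powr (-r)"
    using large[of 0] below[of 0] by linarith
  then have "c1 < C"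
    by (rule mult_right_less_imp_less) simp
  with below have "rate_bounded r ns (\<lambda>i j. - f2 i j)"
    unfolding rate_bounded_def nrm_minus using \<open>0 < c1\<close> large by blast
  moreover have "inr (f (ns i)) (\<lambda>j. - f2 i j) = - (nrm (\<lambda>j. - f2 i j))\<^sup>2" for i
  proof -
    have "inr (f (ns i)) (\<lambda>j. - f2 i j) = inr (\<lambda>j. - f2 i j) (f (ns i))"
      by (rule inr_commute)
    also have "\<dots> = - inr (f2 i) (f (ns i))"
      by (rule inr_minus_left[OF f2 f])
    also have "inr (f2 i) (f (ns i)) = inr (f (ns i)) (f2 i)"
      by (rule inr_commute)
    also have "\<dots> = (nrm (f2 i))\<^sup>2"
      unfolding split inr_add_left[OF f1 f2 f2] orth' inr_self[OF f2] by simp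
    finally show ?thesis
      by (simp add: nrm_minus)
  qed
  ultimately show False
    by (rule not_pythagorean_if_anti_aligned[OF f pyth ns l2_minus[OF f2] inconsistent])
qed

lemma inconsistent_projection:
  assumes ns: "subseq_idx ns" and g: "\<And>i. l2 (g i)" and g_inconsistent: "r_inconsistent w \<sigma> r ns g"
    and F: "\<And>i. l2 (F i)" and F_bound: "\<And>i. nrm (F i) \<le> Cf * real (ns i) powr (-r)"
  shows "inconsistent w \<sigma> ns (\<lambda>i j. inr (F i) (g i) / (nrm (g i))\<^sup>2 * g i j)"
proof -
  obtain c where "0 < c" and g_lower: "\<And>i. c * real (ns i) powr (-r) < nrm (g i)"
    using g_inconsistent subseq_idx_ge_1[OF ns] by (auto simp: r_inconsistent_def rate_bounded_def)
  have "\<bar>inr (F i) (g i) / (nrm (g i))\<^sup>2\<bar> \<le> max 0 Cf / c" for i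
  proof -
    have x: "0 < real (ns i) powr (-r)"
      using subseq_idx_ge_1[OF ns, of i] by simp
    have "0 < nrm (g i)"
      using mult_pos_pos[OF \<open>0 < c\<close> x] g_lower[of i] by linarith
    have "\<bar>inr (F i) (g i) / (nrm (g i))\<^sup>2\<bar> * nrm (g i) = nrm (\<lambda>j. inr (F i) (g i) / (nrm (g i))\<^sup>2 * g i j)"
      by (rule nrm_cmult[OF g, symmetric])
    also have "\<dots> \<le> nrm (F i)"
      using orthogonal_projection_line(5)[OF F g \<open>0 < nrm (g i)\<close>] .
    also have "\<dots> \<le> max 0 Cf * real (ns i) powr (-r)"
      using F_bound[of i] mult_right_mono[OF max.cobounded2 less_imp_le[OF x], of Cf 0] by linarith
    also have "\<dots> = max 0 Cf / c * (c * real (ns i) powr (-r))"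
      using \<open>0 < c\<close> by simp
    also have "\<dots> \<le> max 0 Cf / c * nrm (g i)"
      using g_lower[of i] \<open>0 < c\<close> by (intro mult_left_mono) simp_all
    finally show ?thesis
      using \<open>0 < nrm (g i)\<close> by (rule mult_right_le_imp_le)
  qed
  then show ?thesis
    using g_inconsistent g
    by (intro inconsistent_cmult_bounded filterlim_subseq_idx ns) (simp_all add: r_inconsistent_def)
qed

text \<open>The inconsistent component is the projection of \<open>f (ns i)\<close> onto \<open>g i\<close>: a bounded multiple
  of \<open>g i\<close>, whose norm is of order \<open>n\<^sup>-\<^sup>r\<close> because the inner product is not \<open>o(n\<^sup>-\<^sup>2\<^sup>r)\<close>.\<close>

lemma inconsistent_component_if_inr_large:
  assumes f: "\<And>n. l2 (f n)" and rate: "rate_bounded r id f"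
    and ns: "subseq_idx ns" and g: "\<And>i. l2 (g i)" and g_inconsistent: "r_inconsistent w \<sigma> r ns g"
    and "0 < \<epsilon>" and large: "\<And>i. \<epsilon> \<le> \<bar>inr (f (ns i)) (g i) / real (ns i) powr (-2*r)\<bar>"
  shows "\<exists>f1 f2 c1. 0 < c1 \<and>
    (\<forall>i. l2 (f1 i) \<and> l2 (f2 i) \<and> f (ns i) = (\<lambda>j. f1 i j + f2 i j) \<and>
         inr (f2 i) (f1 i) = 0 \<and> c1 * real (ns i) powr (-r) < nrm (f2 i)) \<and>
    inconsistent w \<sigma> ns f2"
proof -
  obtain c C where "0 < c"
    and g_bounds: "\<And>i. c * real (ns i) powr (-r) < nrm (g i) \<and> nrm (g i) < C * real (ns i) powr (-r)"
    using g_inconsistent subseq_idx_ge_1[OF ns] by (auto simp: r_inconsistent_def rate_bounded_def)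
  obtain Cf where "\<And>n. 1 \<le> n \<Longrightarrow> nrm (f n) < Cf * real n powr (-r)"
    using rate by (auto simp: rate_bounded_def)
  then have f_bound: "nrm (f (ns i)) \<le> Cf * real (ns i) powr (-r)" for i
    using subseq_idx_ge_1[OF ns] less_imp_le by blast
  define x where "x i = real (ns i) powr (-r)" for i
  have x: "0 < x i" "real (ns i) powr (-2*r) = (x i)\<^sup>2" for i
    using subseq_idx_ge_1[OF ns, of i] by (simp_all add: x_def powr_power)
  have g_pos: "0 < nrm (g i)" for i
    using mult_pos_pos[OF \<open>0 < c\<close> x(1)[of i]] g_bounds[of i] unfolding x_def by linarith
  have "0 < C * x 0"
    using g_bounds[of 0] g_pos[of 0] unfolding x_def by linarith
  then have "0 < C"
    using x(1)[of 0] by (simp add: zero_less_mult_iff)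
  define f2 where "f2 i = (\<lambda>j. inr (f (ns i)) (g i) / (nrm (g i))\<^sup>2 * g i j)" for i
  define f1 where "f1 i = (\<lambda>j. f (ns i) j - f2 i j)" for i
  have proj: "l2 (f2 i)" "l2 (f1 i)" "inr (f2 i) (f1 i) = 0"
    "nrm (f2 i) = \<bar>inr (f (ns i)) (g i)\<bar> / nrm (g i)" for i
    unfolding f1_def f2_def using orthogonal_projection_line[OF f g g_pos] by simp_all
  have "inconsistent w \<sigma> ns f2"
    unfolding f2_def by (rule inconsistent_projection[OF ns g g_inconsistent f f_bound])
  moreover have "\<epsilon> / (2 * C) * real (ns i) powr (-r) < nrm (f2 i)" for i
  proof -
    have "\<epsilon> * (x i)\<^sup>2 \<le> \<bar>inr (f (ns i)) (g i)\<bar>"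
      using large[of i, unfolded x(2)] x(1)[of i] by (simp add: abs_divide pos_le_divide_eq)
    have "\<epsilon> / (2 * C) * x i < \<epsilon> / C * x i"
      using \<open>0 < \<epsilon>\<close> \<open>0 < C\<close> x(1)[of i] by (simp add: field_simps)
    also have "\<dots> = \<epsilon> * (x i)\<^sup>2 / (C * x i)"
      using x(1)[of i] by (simp add: power2_eq_square)
    also have "\<dots> \<le> \<bar>inr (f (ns i)) (g i)\<bar> / nrm (g i)"
      using \<open>\<epsilon> * (x i)\<^sup>2 \<le> _\<close> g_bounds[of i] g_pos[of i] \<open>0 < \<epsilon>\<close>
      by (intro frac_le) (simp_all add: x_def less_imp_le)
    finally show ?thesis
      by (simp add: proj(4) x_def)
  qed
  moreover have "0 < \<epsilon> / (2 * C)"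
    using \<open>0 < \<epsilon>\<close> \<open>0 < C\<close> by simp
  ultimately show ?thesis
    using proj(1-3) by (intro exI[of _ f1] exI[of _ f2] exI[of _ "\<epsilon> / (2 * C)"]) (auto simp: f1_def)
qed

lemma pythagorean_if_purely_consistent:
  assumes f: "\<And>n. l2 (f n)" and rate: "rate_bounded r id f"
    and pure: "purely_r_consistent w \<sigma> r f"
  shows "pythagorean_wrt_inconsistent w \<sigma> r f"
  unfolding pythagorean_wrt_inconsistent_iff_inr[OF f]
proof (intro allI impI, elim conjE, rule ccontr)
  fix ns g
  assume ns: "subseq_idx ns" and g: "\<forall>i. l2 (g i)" and g_inconsistent: "r_inconsistent w \<sigma> r ns g"
    and not_small: "\<not> (\<lambda>i. inr (f (ns i)) (g i) / real (ns i) powr (-2*r)) \<longlonglongrightarrow> 0"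
  from not_small obtain \<epsilon> where "0 < \<epsilon>"
    and often: "\<exists>\<^sub>F i in sequentially. \<epsilon> \<le> \<bar>inr (f (ns i)) (g i) / real (ns i) powr (-2*r)\<bar>"
    by (rule frequently_ge_if_not_tendsto_0)
  obtain \<phi> :: "nat \<Rightarrow> nat" where \<phi>: "strict_mono \<phi>"
    and large: "\<And>k. \<epsilon> \<le> \<bar>inr (f (ns (\<phi> k))) (g (\<phi> k)) / real (ns (\<phi> k)) powr (-2*r)\<bar>"
    using frequently_sequentially_subseq[OF often] by blast
  have "r_inconsistent w \<sigma> r (\<lambda>k. ns (\<phi> k)) (\<lambda>k. g (\<phi> k))"
    using g_inconsistent inconsistent_subseq[OF filterlim_subseq_idx[OF ns] _ _ \<phi>] g rate_bounded_subseq
    by (simp add: r_inconsistent_def)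
  from inconsistent_component_if_inr_large[OF f rate subseq_idx_comp[OF ns \<phi>] _ this \<open>0 < \<epsilon>\<close> large]
  show False
    using pure g subseq_idx_comp[OF ns \<phi>] unfolding purely_r_consistent_def by blast
qed

lemma purely_r_consistent_iff_pythagorean:
  assumes "\<And>n. l2 (f n)" and "rate_bounded r id f"
  shows "purely_r_consistent w \<sigma> r f \<longleftrightarrow> pythagorean_wrt_inconsistent w \<sigma> r f"
  using assms pythagorean_if_purely_consistent consistent_if_pythagorean
    no_inconsistent_component_if_pythagorean
  unfolding purely_r_consistent_def r_consistent_def by blast

end

theorem theorem12:
  fixes w :: "nat \<Rightarrow> nat \<Rightarrow> real" and \<sigma> r :: real and f :: "nat \<Rightarrow> nat \<Rightarrow> real"
  assumes sigma: "0 < \<sigma>"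
    and r: "0 < r" "r < 1/2"
    and weights: "\<forall>n\<ge>1. (\<forall>j. 0 \<le> w n j) \<and> summable (w n)"
    and A1: "\<forall>n\<ge>1. \<forall>j. w n (Suc j) \<le> w n j"
    and A2: "\<exists>C1 C2. 0 < C1 \<and> (\<forall>n\<ge>1. C1 < real n ^ 2 / \<sigma> ^ 4 * (\<Sum>j. (w n j)\<^sup>2)
                                      \<and> real n ^ 2 / \<sigma> ^ 4 * (\<Sum>j. (w n j)\<^sup>2) < C2)"
    and A3: "\<exists>c1 c2. 0 < c1 \<and> (\<forall>n\<ge>1. c1 * real n powr (-2*r) \<le> rho w n
                                      \<and> rho w n \<le> c2 * real n powr (-2*r))"
    and A4: "\<exists>C1 lam. 0 < C1 \<and> 1 < lam \<and> (\<forall>\<delta>>0. \<forall>n\<ge>1.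
               w n (nat \<lfloor>(1 + \<delta>) * real (kn w n)\<rfloor> - 1) < C1 * (1 + \<delta>) powr (-lam) * kap w n)"
    and A5a: "\<exists>c C. 0 < c \<and> (\<forall>n\<ge>1. c * kap w n \<le> w n 0 \<and> w n 0 \<le> C * kap w n)"
    and A5b: "\<forall>c>1. \<exists>C>0. \<forall>n\<ge>1. w n (nat \<lfloor>c * real (kn w n)\<rfloor> - 1) \<ge> C * kap w n"
    and fl2: "\<forall>n. l2 (f n)"
    and fnorm: "rate_bounded r id f"
  shows "purely_r_consistent w \<sigma> r f \<longleftrightarrow>
     (\<forall>ns f1. subseq_idx ns \<and> (\<forall>i. l2 (f1 i)) \<and> r_inconsistent w \<sigma> r ns f1 \<longrightarrow>
        (\<lambda>i. ((nrm (\<lambda>j. f (ns i) j + f1 i j))\<^sup>2 - (nrm (f (ns i)))\<^sup>2 - (nrm (f1 i))\<^sup>2)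
              / real (ns i) powr (-2*r)) \<longlonglongrightarrow> 0)"
proof -
  obtain C1 C2 where "0 < C1"
    and sq: "\<And>n. 1 \<le> n \<Longrightarrow> C1 < real n ^ 2 / \<sigma> ^ 4 * (\<Sum>j. (w n j)\<^sup>2)
                              \<and> real n ^ 2 / \<sigma> ^ 4 * (\<Sum>j. (w n j)\<^sup>2) < C2"
    using A2 by blast
  obtain c1 where "0 < c1" and "\<And>n. 1 \<le> n \<Longrightarrow> c1 * real n powr (-2*r) \<le> rho w n"
    using A3 by blast
  moreover obtain C where "\<And>n. 1 \<le> n \<Longrightarrow> w n 0 \<le> C * kap w n"
    using A5a by blast
  moreover have "\<And>n. 1 \<le> n \<Longrightarrow> decseq (w n)"
    using A1 by (simp add: decseq_SucI)
  ultimately interpret asymptotic_weighted_chi2_test w \<sigma>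
    using sigma r(2) weights sq \<open>0 < C1\<close>
    by (intro asymptotic_weighted_chi2_test_if_weight_bounds[of \<sigma> r w C1 C2 c1 C]) auto
  show ?thesis
    using purely_r_consistent_iff_pythagorean[of f r] fl2 fnorm
    unfolding pythagorean_wrt_inconsistent_def by blast
qed

end
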